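(* Let $\mathcal{T}=(V,A,E,f,q)$ and $\mathcal{T}'$ be decorated trees such that $\mathcal{T}'$ is obtained from $\mathcal{T}$ by one of the following four operations: (a) for an edge $e=\{v,\alpha\}$ with $v\in V$, $\alpha\in A_0$ and $q(e,v)=1$, delete $\alpha$ and $e$; (b) for an edge $e=\{v,t\}$ with $v,t\in V$, $\delta_t=1$ and $q(e,v)=1$, delete $t$ and $e$; (c) for $v\in V$ with $\delta_v=2$ and incident edges $e_1=\{u_1,v\}$, $e_2=\{v,u_2\}$, delete $v,e_1,e_2$ and add the edge $e'=\{u_1,u_2\}$ with decorations $q(e_1,u_1)$ near $u_1$ and $q(e_2,u_2)$ near $u_2$; (d) for an edge $e=\{v_1,v_2\}$ with $v_1,v_2\in V$, $q(e,v_1)=Q(e,v_2)$ and $q(e,v_2)=Q(e,v_1)$, delete $e,v_1,v_2$, add a new vertex $v$, and replace each edge $\varepsilon=\{x,v^*\}$ with $v^*\in\{v_1,v_2\}$, $x\notin\{v_1,v_2\}$ by an edge $\varepsilon'=\{x,v\}$ decorated $q(\varepsilon,x)$ near $x$ and $q(\varepsilon,v^* )$ near $v$. Then $M(\mathcal{T})=M(\mathcal{T}')$ and $F(\mathcal{T})=F(\mathcal{T}')$.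
   Context: A graph is a pair $(X_0,X_1)$ of finite sets such that each element of $X_1$ (an edge) is a $2$-element subset of $X_0$; elements of $X_0$ are cells. The valency $\delta_x$ of a cell is the number of edges containing it. A path is a tuple $(x_0,\dots,x_n)$ ($n\ge0$) of cells with $\{x_i,x_{i+1}\}$ an edge for each $i<n$, these edges pairwise distinct; a cell/edge is in the path if it is some $x_i$ / some $\{x_i,x_{i+1}\}$. The graph is a tree if any two cells $x,y$ are joined by a unique path $\gamma_{x,y}$. A decorated tree is $(V,A,E,f,q)$ with $V$ (vertices), $A$ (arrows) finite disjoint sets, $(V\cup A,E)$ a tree, every arrow of valency $1$, $f:A\to\mathbb{Z}$, $q(e,x)\in\mathbb{Z}$ for each $e\in E$, $x\in e$, with $q(e,\alpha)=1$ for $\alpha\in A$, and for each $v\in V$ and distinct edges $e,e'\ni v$, $\gcd(q(e,v),q(e',v))=1$. $A_0=\{\alpha\in A:f(\alpha)=0\}$. For $x\in V\cup A$, $e\ni x$: $Q(e,x)=\prod q(e',x)$ over edges $e'\ne e$ containing $x$ (empty product $=1$). An edge $\varepsilon$ is incident to a path $\gamma$ if it is not in $\gamma$ but contains a cell $u$ of $\gamma$; $q(\varepsilon,\gamma):=q(\varepsilon,u)$. For $v\ne\alpha$, $v\in V\cup A$, $\alpha\in A$: $x_{v,\alpha}=f(\alpha)\prod_\varepsilon q(\varepsilon,\gamma_{v,\alpha})$ over edges incident to $\gamma_{v,\alpha}$; $\hat x_{v,\alpha}$ the same with product restricted to $\varepsilon\not\ni v$. For $v\in V\cup A_0$, $N_v=\sum_{\alpha\in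 A\setminus A_0}x_{v,\alpha}$; $M(\mathcal{T})=-\sum_{v\in V\cup A_0}N_v(\delta_v-2)$. For $u\in V\cup A$, $e\ni u$: $p(u,e)=\sum\hat x_{u,\alpha}$ over $\alpha\in A\setminus A_0$ with $e$ in $\gamma_{u,\alpha}$. For $\alpha\in A\setminus A_0$ with unique edge $e_\alpha$: $F(\alpha)=\gcd(f(\alpha),p(\alpha,e_\alpha))\ge0$; $F(\mathcal{T})=\sum_{\alpha\in A\setminus A_0}F(\alpha)$. *)

theory Defs
  imports Main
begin

definition is_graph :: "'a set \<Rightarrow> 'a set set \<Rightarrow> bool" where
  "is_graph X0 X1 \<longleftrightarrow> finite X0 \<and> (\<forall>e\<in>X1. e \<subseteq> X0 \<and> card e = 2)"

definition valency :: "'a set set \<Rightarrow> 'a \<Rightarrow> nat" where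
  "valency X1 x = card {e \<in> X1. x \<in> e}"

definition path_edges :: "'a list \<Rightarrow> 'a set list" where
  "path_edges p = map (\<lambda>i. {p ! i, p ! Suc i}) [0..<length p - 1]"

definition is_path :: "'a set \<Rightarrow> 'a set set \<Rightarrow> 'a list \<Rightarrow> bool" where
  "is_path X0 X1 p \<longleftrightarrow> p \<noteq> [] \<and> set p \<subseteq> X0
     \<and> (\<forall>i < length p - 1. {p ! i, p ! Suc i} \<in> X1)
     \<and> distinct (path_edges p)"

definition is_tree :: "'a set \<Rightarrow> 'a set set \<Rightarrow> bool" where
  "is_tree X0 X1 \<longleftrightarrow> is_graph X0 X1 \<and>
     (\<forall>x\<in>X0. \<forall>y\<in>X0. \<exists>!p. is_path X0 X1 p \<and> hd p = x \<and> last p = y)"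

definition gpath :: "'a set \<Rightarrow> 'a set set \<Rightarrow> 'a \<Rightarrow> 'a \<Rightarrow> 'a list" where
  "gpath X0 X1 x y = (THE p. is_path X0 X1 p \<and> hd p = x \<and> last p = y)"

record 'a dtree =
  dV :: "'a set"
  dA :: "'a set"
  dE :: "'a set set"
  df :: "'a \<Rightarrow> int"
  dq :: "'a set \<Rightarrow> 'a \<Rightarrow> int"

definition cells :: "'a dtree \<Rightarrow> 'a set" where
  "cells T = dV T \<union> dA T"

definition val :: "'a dtree \<Rightarrow> 'a \<Rightarrow> nat" where
  "val T x = valency (dE T) x"

definition decorated_tree :: "'a dtree \<Rightarrow> bool" where
  "decorated_tree T \<longleftrightarrow>
     finite (dV T) \<and> finite (dA T) \<and> dV T \<inter> dA T = {} \<and>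
     is_tree (cells T) (dE T) \<and>
     (\<forall>\<alpha>\<in>dA T. val T \<alpha> = 1) \<and>
     (\<forall>e\<in>dE T. \<forall>\<alpha>\<in>dA T. \<alpha> \<in> e \<longrightarrow> dq T e \<alpha> = 1) \<and>
     (\<forall>v\<in>dV T. \<forall>e\<in>dE T. \<forall>e'\<in>dE T. v \<in> e \<longrightarrow> v \<in> e' \<longrightarrow> e \<noteq> e' \<longrightarrow>
        gcd (dq T e v) (dq T e' v) = 1)"

definition A0 :: "'a dtree \<Rightarrow> 'a set" where
  "A0 T = {\<alpha> \<in> dA T. df T \<alpha> = 0}"

definition gam :: "'a dtree \<Rightarrow> 'a \<Rightarrow> 'a \<Rightarrow> 'a list" where
  "gam T x y = gpath (cells T) (dE T) x y"

definition QQ :: "'a dtree \<Rightarrow> 'a set \<Rightarrow> 'a \<Rightarrow> int" where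
  "QQ T e x = (\<Prod>e'\<in>{e' \<in> dE T. x \<in> e' \<and> e' \<noteq> e}. dq T e' x)"

definition incident_edges :: "'a dtree \<Rightarrow> 'a list \<Rightarrow> 'a set set" where
  "incident_edges T p = {\<epsilon> \<in> dE T. \<epsilon> \<notin> set (path_edges p) \<and> (\<exists>u\<in>set p. u \<in> \<epsilon>)}"

definition qpath :: "'a dtree \<Rightarrow> 'a set \<Rightarrow> 'a list \<Rightarrow> int" where
  "qpath T \<epsilon> p = dq T \<epsilon> (THE u. u \<in> set p \<and> u \<in> \<epsilon>)"

definition xx :: "'a dtree \<Rightarrow> 'a \<Rightarrow> 'a \<Rightarrow> int" where
  "xx T v \<alpha> = df T \<alpha> * (\<Prod>\<epsilon>\<in>incident_edges T (gam T v \<alpha>). qpath T \<epsilon> (gam T v \<alpha>))"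

definition xhat :: "'a dtree \<Rightarrow> 'a \<Rightarrow> 'a \<Rightarrow> int" where
  "xhat T v \<alpha> = df T \<alpha> *
     (\<Prod>\<epsilon>\<in>{\<epsilon> \<in> incident_edges T (gam T v \<alpha>). v \<notin> \<epsilon>}. qpath T \<epsilon> (gam T v \<alpha>))"

definition NN :: "'a dtree \<Rightarrow> 'a \<Rightarrow> int" where
  "NN T v = (\<Sum>\<alpha>\<in>dA T - A0 T. xx T v \<alpha>)"

definition MM :: "'a dtree \<Rightarrow> int" where
  "MM T = - (\<Sum>v\<in>dV T \<union> A0 T. NN T v * (int (val T v) - 2))"

definition pp :: "'a dtree \<Rightarrow> 'a \<Rightarrow> 'a set \<Rightarrow> int" where
  "pp T u e = (\<Sum>\<alpha>\<in>{\<alpha> \<in> dA T - A0 T. e \<in> set (path_edges (gam T u \<alpha>))}. xhat T u \<alpha>)"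

definition arrow_edge :: "'a dtree \<Rightarrow> 'a \<Rightarrow> 'a set" where
  "arrow_edge T \<alpha> = (THE e. e \<in> dE T \<and> \<alpha> \<in> e)"

definition Farrow :: "'a dtree \<Rightarrow> 'a \<Rightarrow> int" where
  "Farrow T \<alpha> = gcd (df T \<alpha>) (pp T \<alpha> (arrow_edge T \<alpha>))"

definition FF :: "'a dtree \<Rightarrow> int" where
  "FF T = (\<Sum>\<alpha>\<in>dA T - A0 T. Farrow T \<alpha>)"

definition keeps_f :: "'a dtree \<Rightarrow> 'a dtree \<Rightarrow> bool" where
  "keeps_f T T' \<longleftrightarrow> (\<forall>\<alpha>\<in>dA T'. df T' \<alpha> = df T \<alpha>)"

definition keeps_q_on :: "'a set set \<Rightarrow> 'a dtree \<Rightarrow> 'a dtree \<Rightarrow> bool" where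
  "keeps_q_on S T T' \<longleftrightarrow> (\<forall>e\<in>S. \<forall>x\<in>e. dq T' e x = dq T e x)"

definition op_a :: "'a dtree \<Rightarrow> 'a dtree \<Rightarrow> bool" where
  "op_a T T' \<longleftrightarrow> (\<exists>v \<alpha>. v \<in> dV T \<and> \<alpha> \<in> A0 T \<and> {v, \<alpha>} \<in> dE T \<and> dq T {v, \<alpha>} v = 1 \<and>
      dV T' = dV T \<and> dA T' = dA T - {\<alpha>} \<and> dE T' = dE T - {{v, \<alpha>}} \<and>
      keeps_f T T' \<and> keeps_q_on (dE T') T T')"

definition op_b :: "'a dtree \<Rightarrow> 'a dtree \<Rightarrow> bool" where
  "op_b T T' \<longleftrightarrow> (\<exists>v t. v \<in> dV T \<and> t \<in> dV T \<and> {v, t} \<in> dE T \<and> val T t = 1 \<and>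
      dq T {v, t} v = 1 \<and>
      dV T' = dV T - {t} \<and> dA T' = dA T \<and> dE T' = dE T - {{v, t}} \<and>
      keeps_f T T' \<and> keeps_q_on (dE T') T T')"

definition op_c :: "'a dtree \<Rightarrow> 'a dtree \<Rightarrow> bool" where
  "op_c T T' \<longleftrightarrow> (\<exists>v u1 u2. v \<in> dV T \<and> val T v = 2 \<and>
      {u1, v} \<in> dE T \<and> {v, u2} \<in> dE T \<and> u1 \<noteq> u2 \<and>
      dV T' = dV T - {v} \<and> dA T' = dA T \<and>
      dE T' = (dE T - {{u1, v}, {v, u2}}) \<union> {{u1, u2}} \<and>
      keeps_f T T' \<and> keeps_q_on (dE T - {{u1, v}, {v, u2}}) T T' \<and>
      dq T' {u1, u2} u1 = dq T {u1, v} u1 \<and> dq T' {u1, u2} u2 = dq T {v, u2} u2)"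

definition op_d :: "'a dtree \<Rightarrow> 'a dtree \<Rightarrow> bool" where
  "op_d T T' \<longleftrightarrow> (\<exists>v1 v2 v. v1 \<in> dV T \<and> v2 \<in> dV T \<and> {v1, v2} \<in> dE T \<and>
      dq T {v1, v2} v1 = QQ T {v1, v2} v2 \<and> dq T {v1, v2} v2 = QQ T {v1, v2} v1 \<and>
      v \<notin> cells T \<and>
      dV T' = (dV T - {v1, v2}) \<union> {v} \<and> dA T' = dA T \<and>
      dE T' = {\<epsilon> \<in> dE T. v1 \<notin> \<epsilon> \<and> v2 \<notin> \<epsilon>} \<union>
              {{x, v} | x. \<exists>w\<in>{v1, v2}. {x, w} \<in> dE T \<and> x \<notin> {v1, v2}} \<and>
      keeps_f T T' \<and> keeps_q_on {\<epsilon> \<in> dE T. v1 \<notin> \<epsilon> \<and> v2 \<notin> \<epsilon>} T T' \<and>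
      (\<forall>x w. w \<in> {v1, v2} \<longrightarrow> {x, w} \<in> dE T \<longrightarrow> x \<notin> {v1, v2} \<longrightarrow>
          dq T' {x, v} x = dq T {x, w} x \<and> dq T' {x, v} v = dq T {x, w} w))"

end

(*
  Each of the four operations contracts an edge {a, b} of T to a single cell c: in (a) and (b)
  the deleted leaf is merged into its neighbour, in (c) the vertex v into u1, and in (d) the
  vertices v1 and v2 into the new vertex.  Contraction maps the path between two cells to the
  path between their images (dropping the repeated c), and the edges incident to it away from
  {a, b} correspond bijectively and keep their decorations.  Near {a, b} the hypotheses of the
  operation (q = 1 in (a) and (b), valency 2 in (c), q(e, v1) = Q(e, v2) and q(e, v2) = Q(e, v1)
  in (d)) say precisely that the decorations at c of the edges leaving the path multiply to
  those at a and b.  Hence x(u, alpha) is unchanged for every arrow alpha of non-zero weight,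
  which gives F and N(c) = N(b), and N(c) = N(a) unless a has valency 2.  Together with
  delta(c) - 2 = (delta(a) - 2) + (delta(b) - 2) this gives M.
*)
theory Submission
  imports Defs
begin

section \<open>Paths in trees\<close>

lemma path_edges_conv_zip: "path_edges p = map (\<lambda>(x, y). {x, y}) (zip p (tl p))"
  by (rule nth_equalityI) (auto simp: path_edges_def nth_tl)

lemma path_edges_Nil [simp]: "path_edges [] = []"
  and path_edges_singleton [simp]: "path_edges [x] = []"
  and path_edges_Cons_Cons [simp]: "path_edges (x # y # zs) = {x, y} # path_edges (y # zs)"
  by (simp_all add: path_edges_conv_zip)

lemma path_edges_snoc:
  "xs \<noteq> [] \<Longrightarrow> path_edges (xs @ [y]) = path_edges xs @ [{last xs, y}]"
  by (induction xs rule: induct_list012) auto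

lemma path_edges_append:
  "path_edges (xs @ y # ys) = path_edges (xs @ [y]) @ path_edges (y # ys)"
  by (induction xs rule: induct_list012) auto

lemma path_edges_rev: "path_edges (rev p) = rev (path_edges p)"
proof (induction p rule: induct_list012)
  case (3 x y zs)
  have "path_edges (rev (y # zs) @ [x]) = path_edges (rev (y # zs)) @ [{y, x}]"
    by (subst path_edges_snoc) auto
  then show ?case using 3 by (simp add: insert_commute)
qed auto

lemma path_edges_subset: "\<epsilon> \<in> set (path_edges p) \<Longrightarrow> \<epsilon> \<subseteq> set p"
  by (induction p rule: induct_list012) auto

lemma path_edges_split:
  "\<epsilon> \<in> set (path_edges p) \<Longrightarrow> \<exists>xs u w ys. p = xs @ u # w # ys \<and> \<epsilon> = {u, w}"
proof (induction p rule: induct_list012)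
  case (3 x y zs)
  show ?case
  proof (cases "\<epsilon> = {x, y}")
    case True
    then show ?thesis by (intro exI[of _ "[]"]) auto
  next
    case False
    then obtain xs u w ys where "y # zs = xs @ u # w # ys" "\<epsilon> = {u, w}"
      using 3 by auto
    then show ?thesis by (intro exI[of _ "x # xs"]) auto
  qed
qed auto

lemma path_edges_append_prefix:
  "ys \<noteq> [] \<Longrightarrow> \<exists>vs. path_edges (ys @ zs) = path_edges ys @ vs"
proof (induction ys rule: induct_list012)
  case (2 y)
  then show ?case by (cases zs) auto
qed auto

lemma path_edges_append_infix:
  "ys \<noteq> [] \<Longrightarrow> \<exists>us vs. path_edges (xs @ ys @ zs) = us @ path_edges ys @ vs"
proof (induction xs)
  case Nil
  then show ?case using path_edges_append_prefix by (metis append_Nil)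
next
  case (Cons x xs)
  then obtain us vs where "path_edges (xs @ ys @ zs) = us @ path_edges ys @ vs"
    by blast
  then show ?case
    using Cons.prems by (cases "xs @ ys @ zs") (auto intro: exI[of _ "_ # us"])
qed

lemma distinct_path_edges: "distinct p \<Longrightarrow> distinct (path_edges p)"
proof (induction p rule: induct_list012)
  case (3 x y zs)
  have "{x, y} \<notin> set (path_edges (y # zs))"
    using path_edges_subset 3(3) by fastforce
  then show ?case using 3 by auto
qed auto

lemma is_path_iff_successively:
  "is_path X0 X1 p \<longleftrightarrow> p \<noteq> [] \<and> set p \<subseteq> X0 \<and>
     successively (\<lambda>x y. {x, y} \<in> X1) p \<and> distinct (path_edges p)"
  unfolding is_path_def successively_conv_nth by auto

lemma path_edges_in_edges: "is_path X0 X1 p \<Longrightarrow> \<epsilon> \<in> set (path_edges p) \<Longrightarrow> \<epsilon> \<in> X1"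
  unfolding is_path_def path_edges_def by auto

lemma is_path_if_distinct:
  "p \<noteq> [] \<Longrightarrow> set p \<subseteq> X0 \<Longrightarrow> successively (\<lambda>x y. {x, y} \<in> X1) p \<Longrightarrow> distinct p
   \<Longrightarrow> is_path X0 X1 p"
  by (simp add: is_path_iff_successively distinct_path_edges)

lemma is_path_rev: "is_path X0 X1 p \<Longrightarrow> is_path X0 X1 (rev p)"
  by (simp add: is_path_iff_successively path_edges_rev insert_commute)

lemma is_path_infix: "is_path X0 X1 (xs @ ys @ zs) \<Longrightarrow> ys \<noteq> [] \<Longrightarrow> is_path X0 X1 ys"
  using path_edges_append_infix[of ys xs zs]
  by (auto simp: is_path_iff_successively successively_append_iff)

lemma successively_conj:
  "successively P xs \<Longrightarrow> successively Q xs \<Longrightarrow> successively (\<lambda>x y. P x y \<and> Q x y) xs"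
  by (induction xs rule: induct_list012) auto

lemma remdups_adj_double: "remdups_adj (xs @ x # x # ys) = remdups_adj (xs @ x # ys)"
  using remdups_adj_append[of xs x "x # ys"] remdups_adj_append[of xs x ys] by simp

locale tree =
  fixes X0 :: "'a set" and X1 :: "'a set set"
  assumes is_tree: "is_tree X0 X1"
begin

lemma finite_cells: "finite X0"
  and edge_subset: "\<epsilon> \<in> X1 \<Longrightarrow> \<epsilon> \<subseteq> X0"
  and card_edge: "\<epsilon> \<in> X1 \<Longrightarrow> card \<epsilon> = 2"
  using is_tree by (auto simp: is_tree_def is_graph_def)

lemma finite_edges: "finite X1"
proof -
  have "X1 \<subseteq> Pow X0" using edge_subset by auto
  then show ?thesis using finite_cells finite_subset by blast
qed

lemma edge_doubleton: "\<epsilon> \<in> X1 \<Longrightarrow> \<exists>u w. u \<noteq> w \<and> \<epsilon> = {u, w}"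
  using card_edge by (metis card_2_iff)

lemma edge_ends_neq: "{u, w} \<in> X1 \<Longrightarrow> u \<noteq> w"
  using card_edge by fastforce

lemma edge_other_end:
  assumes "\<epsilon> \<in> X1" "u \<in> \<epsilon>"
  obtains w where "\<epsilon> = {u, w}" "w \<noteq> u"
  using edge_doubleton[OF assms(1)] assms(2) by (auto simp: insert_commute)

lemma gpath:
  assumes "x \<in> X0" "y \<in> X0"
  shows "is_path X0 X1 (gpath X0 X1 x y)" "hd (gpath X0 X1 x y) = x" "last (gpath X0 X1 x y) = y"
proof -
  have "\<exists>!p. is_path X0 X1 p \<and> hd p = x \<and> last p = y"
    using is_tree assms unfolding is_tree_def by blast
  from theI'[OF this] show "is_path X0 X1 (gpath X0 X1 x y)" "hd (gpath X0 X1 x y) = x"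
    "last (gpath X0 X1 x y) = y"
    unfolding gpath_def by blast+
qed

lemma path_unique:
  assumes "is_path X0 X1 p" "is_path X0 X1 q" "hd p = hd q" "last p = last q"
  shows "p = q"
proof -
  have "hd p \<in> X0" "last p \<in> X0"
    using assms(1) unfolding is_path_def by auto
  then have "\<exists>!r. is_path X0 X1 r \<and> hd r = hd p \<and> last r = last p"
    using is_tree unfolding is_tree_def by blast
  then obtain r where "\<forall>s. is_path X0 X1 s \<and> hd s = hd p \<and> last s = last p \<longrightarrow> s = r"
    by (elim ex1E) blast
  then show ?thesis using assms by metis
qed

lemma gpath_of_path:
  assumes "is_path X0 X1 p"
  shows "gpath X0 X1 (hd p) (last p) = p"
proof -
  have "hd p \<in> X0" "last p \<in> X0" using assms unfolding is_path_def by auto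
  then show ?thesis using gpath path_unique assms by metis
qed

lemma singleton_path: "x \<in> X0 \<Longrightarrow> is_path X0 X1 [x]"
  by (simp add: is_path_iff_successively)

lemma edge_path: "{u, w} \<in> X1 \<Longrightarrow> is_path X0 X1 [u, w]"
  using edge_subset edge_ends_neq by (auto simp: is_path_iff_successively)

lemma path_distinct: "is_path X0 X1 p \<Longrightarrow> distinct p"
proof (rule ccontr)
  assume p: "is_path X0 X1 p" and "\<not> distinct p"
  then obtain xs z ys zs where split: "p = xs @ [z] @ ys @ [z] @ zs"
    using not_distinct_decomp by blast
  then have "is_path X0 X1 (z # ys @ [z])"
    using is_path_infix[of X0 X1 xs "z # ys @ [z]" zs] p by simp
  moreover have "z \<in> X0"
    using p split unfolding is_path_def by auto
  ultimately have "z # ys @ [z] = [z]"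
    using path_unique singleton_path by fastforce
  then show False by simp
qed

lemma subpath:
  assumes p: "is_path X0 X1 p" and u: "u \<in> set p" and w: "w \<in> set p"
  obtains q where "is_path X0 X1 q" "hd q = u" "last q = w" "set q \<subseteq> set p"
    "set (path_edges q) \<subseteq> set (path_edges p)"
proof -
  have forward: "\<exists>q. is_path X0 X1 q \<and> hd q = x \<and> last q = y \<and> set q \<subseteq> set p
      \<and> set (path_edges q) \<subseteq> set (path_edges p)"
    if p: "is_path X0 X1 p" and split: "p = xs @ (x # ys @ [y]) @ zs" for p xs x ys y zs
    using is_path_infix[of X0 X1 xs "x # ys @ [y]" zs] path_edges_append_infix[of "x # ys @ [y]" xs zs]
      p split by (intro exI[of _ "x # ys @ [y]"]) auto
  obtain xs r where split: "p = xs @ u # r" using u by (meson split_list)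
  consider "w = u" | "w \<in> set r" | "w \<in> set xs"
    using w split by auto
  then have "\<exists>q. is_path X0 X1 q \<and> hd q = u \<and> last q = w \<and> set q \<subseteq> set p
      \<and> set (path_edges q) \<subseteq> set (path_edges p)"
  proof cases
    case 1
    have "u \<in> X0" using p u unfolding is_path_def by auto
    then show ?thesis using 1 u singleton_path by (intro exI[of _ "[u]"]) auto
  next
    case 2
    then obtain ys zs where "r = ys @ w # zs" by (meson split_list)
    then have "p = xs @ (u # ys @ [w]) @ zs" using split by simp
    then show ?thesis using forward[OF p] by blast
  next
    case 3
    then obtain zs ys where "xs = zs @ w # ys" by (meson split_list)
    then have "rev p = rev r @ (u # rev ys @ [w]) @ rev zs" using split by simp
    then obtain q where "is_path X0 X1 q" "hd q = u" "last q = w" "set q \<subseteq> set (rev p)"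
      "set (path_edges q) \<subseteq> set (path_edges (rev p))"
      using forward[OF is_path_rev[OF p]] by blast
    then show ?thesis by (auto simp: path_edges_rev)
  qed
  then show ?thesis using that by blast
qed

lemma edge_in_path_edges:
  assumes "is_path X0 X1 p" "{u, w} \<in> X1" "u \<in> set p" "w \<in> set p"
  shows "{u, w} \<in> set (path_edges p)"
proof -
  obtain q where q: "is_path X0 X1 q" "hd q = u" "last q = w"
    "set (path_edges q) \<subseteq> set (path_edges p)"
    using subpath assms by metis
  have "q = [u, w]" using path_unique[OF q(1) edge_path[OF assms(2)]] q by simp
  then show ?thesis using q by auto
qed

lemma path_neighbour_unique:
  assumes p: "is_path X0 X1 p" and w: "w \<notin> set p" and "{w, u1} \<in> X1" "{w, u2} \<in> X1"
    and u: "u1 \<in> set p" "u2 \<in> set p"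
  shows "u1 = u2"
proof (rule ccontr)
  assume ne: "u1 \<noteq> u2"
  obtain q where q: "is_path X0 X1 q" "hd q = u1" "last q = u2" "set q \<subseteq> set p"
    using subpath[OF p u] by metis
  have "is_path X0 X1 [u1, w, u2]"
    using assms ne edge_subset by (intro is_path_if_distinct) (auto simp: insert_commute)
  then have "q = [u1, w, u2]" using path_unique[OF q(1)] q by simp
  then show False using q w by auto
qed

lemma path_interior_edges:
  assumes p: "is_path X0 X1 p" and z: "z \<in> set p" "z \<noteq> hd p" "z \<noteq> last p"
  obtains u1 u2 where "u1 \<noteq> u2" "{u1, z} \<in> set (path_edges p)" "{z, u2} \<in> set (path_edges p)"
proof -
  obtain xs ys where split: "p = xs @ z # ys" using z by (meson split_list)
  have xs: "xs \<noteq> []" and ys: "ys \<noteq> []" using z split by auto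
  have "path_edges p = path_edges xs @ [{last xs, z}] @ path_edges (z # ys)"
    using split path_edges_append[of xs z ys] path_edges_snoc[OF xs] by simp
  moreover obtain y ys' where "ys = y # ys'" using ys by (cases ys) auto
  moreover have "distinct p" using path_distinct p by simp
  moreover have "last xs \<in> set xs" using xs by simp
  ultimately show ?thesis using that[of "last xs" y] split by auto
qed

lemma path_edge_at:
  assumes p: "is_path X0 X1 p" and hl: "hd p \<noteq> last p" and z: "z \<in> set p"
  obtains u where "{z, u} \<in> set (path_edges p)"
proof -
  obtain xs ys where split: "p = xs @ z # ys" using z by (meson split_list)
  have edges: "path_edges p = path_edges (xs @ [z]) @ path_edges (z # ys)"
    using split path_edges_append by metis
  show ?thesis
  proof (cases ys)
    case (Cons y ys')
    then show ?thesis using edges that by auto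
  next
    case Nil
    then have xs: "xs \<noteq> []" using hl split by auto
    have "{last xs, z} \<in> set (path_edges p)" using edges path_edges_snoc[OF xs] by simp
    then show ?thesis using that[of "last xs"] by (simp add: insert_commute)
  qed
qed

lemma valency_1_edge_unique:
  "valency X1 z = 1 \<Longrightarrow> \<epsilon>0 \<in> X1 \<Longrightarrow> z \<in> \<epsilon>0 \<Longrightarrow> \<epsilon> \<in> X1 \<Longrightarrow> z \<in> \<epsilon> \<Longrightarrow> \<epsilon> = \<epsilon>0"
  unfolding valency_def by (metis (no_types, lifting) card_1_singletonE mem_Collect_eq singletonD)

lemma valency_2_edges:
  assumes "valency X1 z = 2" "{z, u1} \<in> X1" "{z, u2} \<in> X1" "u1 \<noteq> u2"
  shows "{\<epsilon> \<in> X1. z \<in> \<epsilon>} = {{z, u1}, {z, u2}}"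
proof (rule card_subset_eq[symmetric])
  show "finite {\<epsilon> \<in> X1. z \<in> \<epsilon>}" using finite_edges by simp
  show "{{z, u1}, {z, u2}} \<subseteq> {\<epsilon> \<in> X1. z \<in> \<epsilon>}" using assms(2,3) by simp
  show "card {{z, u1}, {z, u2}} = card {\<epsilon> \<in> X1. z \<in> \<epsilon>}"
    using assms(1,4) unfolding valency_def by (simp add: doubleton_eq_iff)
qed

lemma leaf_edge_subset_path:
  assumes p: "is_path X0 X1 p" "hd p \<noteq> last p" and z: "z \<in> set p" "valency X1 z = 1"
    and \<epsilon>: "\<epsilon> \<in> X1" "z \<in> \<epsilon>"
  shows "\<epsilon> \<subseteq> set p"
proof -
  obtain u where u: "{z, u} \<in> set (path_edges p)" using path_edge_at p z by metis
  then have "\<epsilon> = {z, u}"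
    using valency_1_edge_unique[OF z(2) _ _ \<epsilon>] path_edges_in_edges[OF p(1)] by simp
  then show ?thesis using u path_edges_subset by blast
qed

lemma interior_edge_subset_path:
  assumes p: "is_path X0 X1 p" and z: "z \<in> set p" "z \<noteq> hd p" "z \<noteq> last p" "valency X1 z = 2"
    and \<epsilon>: "\<epsilon> \<in> X1" "z \<in> \<epsilon>"
  shows "\<epsilon> \<subseteq> set p"
proof -
  obtain u1 u2 where u: "u1 \<noteq> u2" "{u1, z} \<in> set (path_edges p)" "{z, u2} \<in> set (path_edges p)"
    using path_interior_edges p z by metis
  then have "{z, u1} \<in> X1" "{z, u2} \<in> X1"
    using path_edges_in_edges[OF p] by (auto simp: insert_commute)
  then have "\<epsilon> = {z, u1} \<or> \<epsilon> = {z, u2}"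
    using valency_2_edges[OF z(4) _ _ u(1)] \<epsilon> by blast
  then show ?thesis using u path_edges_subset by (auto simp: insert_commute)
qed

end

section \<open>Decorated trees\<close>

text \<open>For a path \<gamma> the incident edges are exactly the edges leaving the cell set of \<gamma>, and
  q(\<epsilon>, \<gamma>) is the decoration at the end of \<epsilon> inside it; both only depend on that set.\<close>

definition boundary_edges :: "'a dtree \<Rightarrow> 'a set \<Rightarrow> 'a set set" where
  "boundary_edges T P = {\<epsilon> \<in> dE T. \<epsilon> \<inter> P \<noteq> {} \<and> \<not> \<epsilon> \<subseteq> P}"

definition inner_end :: "'a set \<Rightarrow> 'a set \<Rightarrow> 'a" where
  "inner_end P \<epsilon> = (THE u. u \<in> P \<and> u \<in> \<epsilon>)"

definition boundary_edges_at :: "'a dtree \<Rightarrow> 'a set \<Rightarrow> 'a set \<Rightarrow> 'a set set" where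
  "boundary_edges_at T P Z = {\<epsilon> \<in> boundary_edges T P. inner_end P \<epsilon> \<in> Z}"

definition inner_dq_prod :: "'a dtree \<Rightarrow> 'a set \<Rightarrow> 'a set set \<Rightarrow> int" where
  "inner_dq_prod T P S = (\<Prod>\<epsilon>\<in>S. dq T \<epsilon> (inner_end P \<epsilon>))"

lemma inner_end_eq: "\<epsilon> = {u, w} \<Longrightarrow> u \<in> P \<Longrightarrow> w \<notin> P \<Longrightarrow> inner_end P \<epsilon> = u"
  unfolding inner_end_def by (rule the_equality) auto

lemma boundary_edgeI: "{u, w} \<in> dE T \<Longrightarrow> u \<in> P \<Longrightarrow> w \<notin> P \<Longrightarrow> {u, w} \<in> boundary_edges T P"
  unfolding boundary_edges_def by auto

lemma inner_dq_prod_boundary_edges_split: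
  assumes "finite (dE T)"
  shows "inner_dq_prod T P (boundary_edges T P) =
    inner_dq_prod T P (boundary_edges_at T P (- Z)) * inner_dq_prod T P (boundary_edges_at T P Z)"
proof -
  have "finite (boundary_edges T P)" using assms unfolding boundary_edges_def by simp
  moreover have "boundary_edges T P = boundary_edges_at T P (- Z) \<union> boundary_edges_at T P Z"
    unfolding boundary_edges_at_def by auto
  ultimately show ?thesis
    unfolding inner_dq_prod_def boundary_edges_at_def
    by (subst prod.union_disjoint[symmetric]) (auto intro: prod.cong)
qed

lemma cells_arrow: "\<alpha> \<in> dA T \<Longrightarrow> \<alpha> \<in> cells T"
  by (simp add: cells_def)

lemma decorated_tree_tree: "decorated_tree T \<Longrightarrow> tree (cells T) (dE T)"
  unfolding decorated_tree_def tree_def by simp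

lemma decorated_tree_disjoint: "decorated_tree T \<Longrightarrow> dV T \<inter> dA T = {}"
  unfolding decorated_tree_def by simp

lemma decorated_tree_arrow_val: "decorated_tree T \<Longrightarrow> \<alpha> \<in> dA T \<Longrightarrow> val T \<alpha> = 1"
  unfolding decorated_tree_def by blast

lemma decorated_tree_leaf_edge:
  "decorated_tree T \<Longrightarrow> val T z = 1 \<Longrightarrow> {v, z} \<in> dE T \<Longrightarrow> \<epsilon> \<in> dE T \<Longrightarrow> z \<in> \<epsilon> \<Longrightarrow> \<epsilon> = {v, z}"
  using tree.valency_1_edge_unique[OF decorated_tree_tree] unfolding val_def by (metis insertCI)

definition vertex_term :: "'a dtree \<Rightarrow> 'a \<Rightarrow> int" where
  "vertex_term T v = NN T v * (int (val T v) - 2)"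

lemma MM_eq_sum_vertex_term: "MM T = - (\<Sum>v\<in>dV T \<union> A0 T. vertex_term T v)"
  unfolding MM_def vertex_term_def ..

lemma nonzero_arrows_eq:
  assumes "keeps_f T T'" "dA T - A0 T \<subseteq> dA T'" "dA T' \<subseteq> dA T"
  shows "dA T' - A0 T' = dA T - A0 T"
  using assms unfolding keeps_f_def A0_def by auto

context
  fixes T :: "'a dtree"
  assumes T: "decorated_tree T"
begin

interpretation tree "cells T" "dE T"
  using decorated_tree_tree[OF T] .

lemma boundary_edge_ends:
  assumes "\<epsilon> \<in> boundary_edges T P"
  obtains u w where "\<epsilon> = {u, w}" "u \<in> P" "w \<notin> P" "inner_end P \<epsilon> = u"
proof -
  obtain u w where "\<epsilon> = {u, w}"
    using assms edge_doubleton unfolding boundary_edges_def by blast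
  with assms have "(u \<in> P \<and> w \<notin> P) \<or> (w \<in> P \<and> u \<notin> P)"
    unfolding boundary_edges_def by auto
  then show ?thesis
    using that inner_end_eq \<open>\<epsilon> = {u, w}\<close> by (metis insert_commute)
qed

lemma boundary_edges_at_empty: "Z \<inter> P = {} \<Longrightarrow> boundary_edges_at T P Z = {}"
  unfolding boundary_edges_at_def using boundary_edge_ends
  by (metis (no_types, lifting) Collect_empty_eq disjoint_iff)

lemma gam:
  assumes "x \<in> cells T" "y \<in> cells T"
  shows "is_path (cells T) (dE T) (gam T x y)" "hd (gam T x y) = x" "last (gam T x y) = y"
  using gpath[OF assms] unfolding gam_def by auto

lemma gam_of_path:
  "is_path (cells T) (dE T) p \<Longrightarrow> hd p = x \<Longrightarrow> last p = y \<Longrightarrow> gam T x y = p"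
  unfolding gam_def using gpath_of_path by blast

lemma gam_self: "x \<in> cells T \<Longrightarrow> gam T x x = [x]"
  using gam_of_path singleton_path by fastforce

lemma incident_edges_eq_boundary_edges:
  assumes p: "is_path (cells T) (dE T) p"
  shows "incident_edges T p = boundary_edges T (set p)"
proof (intro set_eqI iffI)
  fix \<epsilon> assume \<epsilon>: "\<epsilon> \<in> incident_edges T p"
  then obtain u w where uw: "\<epsilon> = {u, w}" using edge_doubleton unfolding incident_edges_def by blast
  have "\<not> \<epsilon> \<subseteq> set p"
    using edge_in_path_edges[OF p] \<epsilon> uw unfolding incident_edges_def by auto
  then show "\<epsilon> \<in> boundary_edges T (set p)"
    using \<epsilon> unfolding incident_edges_def boundary_edges_def by auto
next
  fix \<epsilon> assume "\<epsilon> \<in> boundary_edges T (set p)"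
  then show "\<epsilon> \<in> incident_edges T p"
    unfolding boundary_edges_def incident_edges_def using path_edges_subset by fastforce
qed

lemma xx_eq_inner_dq_prod:
  assumes "x \<in> cells T" "y \<in> cells T"
  shows "xx T x y = df T y * inner_dq_prod T (set (gam T x y)) (boundary_edges T (set (gam T x y)))"
  unfolding xx_def qpath_def inner_dq_prod_def inner_end_def
    incident_edges_eq_boundary_edges[OF gam(1)[OF assms]] ..

lemma arrow_edge:
  assumes "\<alpha> \<in> dA T"
  shows "arrow_edge T \<alpha> \<in> dE T" "\<alpha> \<in> arrow_edge T \<alpha>"
    "\<And>\<epsilon>. \<epsilon> \<in> dE T \<Longrightarrow> \<alpha> \<in> \<epsilon> \<Longrightarrow> \<epsilon> = arrow_edge T \<alpha>"
proof -
  have "card {e \<in> dE T. \<alpha> \<in> e} = 1"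
    using decorated_tree_arrow_val[OF T assms] unfolding val_def valency_def .
  then obtain e where e: "{e' \<in> dE T. \<alpha> \<in> e'} = {e}" using card_1_singletonE by metis
  then have "arrow_edge T \<alpha> = e" unfolding arrow_edge_def by (intro the_equality) blast+
  then show "arrow_edge T \<alpha> \<in> dE T" "\<alpha> \<in> arrow_edge T \<alpha>"
    "\<And>\<epsilon>. \<epsilon> \<in> dE T \<Longrightarrow> \<alpha> \<in> \<epsilon> \<Longrightarrow> \<epsilon> = arrow_edge T \<alpha>"
    using e by blast+
qed

text \<open>Every path from an arrow starts with the edge of the arrow, so that edge is never incident
  to the path and x-hat agrees with x.\<close>

lemma pp_arrow_edge:
  assumes \<alpha>: "\<alpha> \<in> dA T"
  shows "pp T \<alpha> (arrow_edge T \<alpha>) = (\<Sum>\<gamma>\<in>dA T - A0 T - {\<alpha>}. xx T \<alpha> \<gamma>)"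
proof -
  have starts: "arrow_edge T \<alpha> \<in> set (path_edges (gam T \<alpha> \<gamma>))" if \<gamma>: "\<gamma> \<in> dA T - {\<alpha>}" for \<gamma>
  proof -
    have p: "is_path (cells T) (dE T) (gam T \<alpha> \<gamma>)" "hd (gam T \<alpha> \<gamma>) = \<alpha>" "last (gam T \<alpha> \<gamma>) = \<gamma>"
      using gam[OF cells_arrow[OF \<alpha>] cells_arrow[of \<gamma>]] \<gamma> by auto
    moreover have "hd (gam T \<alpha> \<gamma>) \<noteq> last (gam T \<alpha> \<gamma>)" using p \<gamma> by auto
    moreover have "\<alpha> \<in> set (gam T \<alpha> \<gamma>)" using p unfolding is_path_def by (metis hd_in_set)
    ultimately obtain u where u: "{\<alpha>, u} \<in> set (path_edges (gam T \<alpha> \<gamma>))"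
      using path_edge_at by blast
    then show ?thesis using arrow_edge(3)[OF \<alpha>] path_edges_in_edges[OF p(1) u] by simp
  qed
  have "{\<gamma> \<in> dA T - A0 T. arrow_edge T \<alpha> \<in> set (path_edges (gam T \<alpha> \<gamma>))} = dA T - A0 T - {\<alpha>}"
    using starts gam_self[OF cells_arrow[OF \<alpha>]] by auto
  moreover have "xhat T \<alpha> \<gamma> = xx T \<alpha> \<gamma>" if "\<gamma> \<in> dA T - A0 T - {\<alpha>}" for \<gamma>
  proof -
    have "{\<epsilon> \<in> incident_edges T (gam T \<alpha> \<gamma>). \<alpha> \<notin> \<epsilon>} = incident_edges T (gam T \<alpha> \<gamma>)"
      using starts[of \<gamma>] that arrow_edge(3)[OF \<alpha>] unfolding incident_edges_def by auto
    then show ?thesis unfolding xhat_def xx_def by simp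
  qed
  ultimately show ?thesis unfolding pp_def by simp
qed

end

section \<open>Contracting an edge\<close>

definition merge :: "'a \<Rightarrow> 'a \<Rightarrow> 'a \<Rightarrow> 'a \<Rightarrow> 'a" where
  "merge a b c z = (if z = a \<or> z = b then c else z)"

lemma merge_image_id: "a \<notin> A \<Longrightarrow> b \<notin> A \<Longrightarrow> merge a b c ` A = A"
  by (auto simp: merge_def)

lemma merge_image: "a \<in> A \<Longrightarrow> merge a b c ` A = A - {a, b} \<union> {c}"
  by (auto simp: merge_def intro!: image_eqI[of c _ a])

definition side_edges :: "'a dtree \<Rightarrow> 'a \<Rightarrow> 'a \<Rightarrow> 'a set set" where
  "side_edges T a b = {\<epsilon> \<in> dE T. a \<in> \<epsilon> \<and> \<epsilon> \<noteq> {a, b}}"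

text \<open>Seen from a, merging the edge {a, b} into c changes nothing: the edges of a keep their
  decoration at a, and the edges of b together carry the decoration q({a, b}, a).\<close>

definition merge_compatible :: "'a dtree \<Rightarrow> 'a dtree \<Rightarrow> 'a \<Rightarrow> 'a \<Rightarrow> 'a \<Rightarrow> bool" where
  "merge_compatible T T' a b c \<longleftrightarrow>
     (\<forall>\<epsilon>\<in>side_edges T a b. dq T' (merge a b c ` \<epsilon>) c = dq T \<epsilon> a) \<and>
     (\<Prod>\<epsilon>\<in>side_edges T b a. dq T' (merge a b c ` \<epsilon>) c) = dq T {a, b} a"

text \<open>T' arises from T by contracting the edge {a, b} to the cell c, which is new or one of a, b.
  The conditions at b are those of operation (d), weakened for a leaf b as in (a) and (b); the
  conditions at a are weakened for operation (c), where a is the deleted vertex of valency 2.\<close>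

locale edge_contraction =
  fixes T T' :: "'a dtree" and a b c :: 'a
  assumes T: "decorated_tree T" and T': "decorated_tree T'"
    and edge_ab: "{a, b} \<in> dE T" and a_vertex: "a \<in> dV T"
    and c_fresh: "c \<notin> cells T - {a, b}"
    and cells_T': "cells T' = merge a b c ` cells T"
    and edges_T': "dE T' = image (merge a b c) ` (dE T - {{a, b}})"
    and dq_far_end: "\<forall>\<epsilon>\<in>dE T - {{a, b}}. \<forall>z\<in>\<epsilon>. z \<notin> {a, b} \<longrightarrow>
      dq T' (merge a b c ` \<epsilon>) z = dq T \<epsilon> z"
    and dq_b_side: "\<forall>\<epsilon>\<in>dE T - {{a, b}}. b \<in> \<epsilon> \<longrightarrow> dq T' (merge a b c ` \<epsilon>) c = dq T \<epsilon> b"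
    and b_side: "val T b = 1 \<or> (\<Prod>\<epsilon>\<in>side_edges T a b. dq T' (merge a b c ` \<epsilon>) c) = dq T {a, b} b"
    and a_side: "merge_compatible T T' a b c \<or> val T a = 2"
begin

abbreviation \<phi> where "\<phi> \<equiv> merge a b c"

sublocale t: tree "cells T" "dE T"
  using decorated_tree_tree[OF T] .

sublocale t': tree "cells T'" "dE T'"
  using decorated_tree_tree[OF T'] .

lemma merge_a [simp]: "\<phi> a = c" and merge_b [simp]: "\<phi> b = c"
  by (auto simp: merge_def)

lemma merge_other: "z \<notin> {a, b} \<Longrightarrow> \<phi> z = z"
  by (auto simp: merge_def)

lemma a_neq_b: "a \<noteq> b"
  using t.edge_ends_neq[OF edge_ab] .

lemma a_cell: "a \<in> cells T" and b_cell: "b \<in> cells T"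
  using t.edge_subset[OF edge_ab] by auto

lemma c_neq: "z \<in> cells T \<Longrightarrow> z \<notin> {a, b} \<Longrightarrow> z \<noteq> c"
  using c_fresh by auto

lemma merge_eq_c_iff: "z \<in> cells T \<Longrightarrow> \<phi> z = c \<longleftrightarrow> z \<in> {a, b}"
  using c_fresh by (auto simp: merge_def)

lemma merge_edge:
  assumes "{s, t} \<in> dE T" "{s, t} \<noteq> {a, b}"
  shows "{\<phi> s, \<phi> t} \<in> dE T'"
proof -
  have "\<phi> ` {s, t} \<in> dE T'" unfolding edges_T' using assms by blast
  then show ?thesis by simp
qed

lemma map_merge_path:
  assumes p: "is_path (cells T) (dE T) p"
  shows "successively (\<lambda>s t. s = t \<or> {s, t} \<in> dE T') (map \<phi> p)"
proof -
  have "successively (\<lambda>s t. {s, t} \<in> dE T) p"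
    using p by (simp add: is_path_iff_successively)
  then show ?thesis
    unfolding successively_map
  proof (rule successively_mono)
    fix s t assume st: "{s, t} \<in> dE T"
    show "\<phi> s = \<phi> t \<or> {\<phi> s, \<phi> t} \<in> dE T'"
    proof (cases "{s, t} = {a, b}")
      case True
      then have "s \<in> {a, b}" "t \<in> {a, b}" by auto
      then show ?thesis by auto
    qed (use st merge_edge in blast)
  qed
qed

lemma distinct_remdups_adj_map_merge_path:
  assumes p: "is_path (cells T) (dE T) p"
  shows "distinct (remdups_adj (map \<phi> p))"
proof -
  have dist: "distinct p" using t.path_distinct[OF p] .
  have cells: "set p \<subseteq> cells T" using p unfolding is_path_def by simp
  show ?thesis
  proof (cases "a \<in> set p \<and> b \<in> set p")
    case True
    then obtain xs u w ys where split: "p = xs @ u # w # ys" and uw: "{u, w} = {a, b}"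
      using t.edge_in_path_edges[OF p edge_ab] path_edges_split by metis
    then have off: "set xs \<inter> {a, b} = {}" "set ys \<inter> {a, b} = {}"
      using dist by (auto simp: doubleton_eq_iff)
    have "map \<phi> xs = xs" "map \<phi> ys = ys"
      using off by (auto intro!: map_idI merge_other)
    then have "map \<phi> p = xs @ c # c # ys"
      using split uw by (auto simp: doubleton_eq_iff)
    moreover have "c \<notin> set xs" "c \<notin> set ys"
      using off cells split c_neq by auto
    ultimately show ?thesis
      using dist split by (simp add: remdups_adj_double remdups_adj_distinct)
  next
    case False
    have "inj_on \<phi> (set p)"
    proof (rule inj_onI)
      fix s t assume st: "s \<in> set p" "t \<in> set p" "\<phi> s = \<phi> t"
      have "s \<in> cells T" "t \<in> cells T" using st cells by auto
      then have "s \<in> {a, b} \<longleftrightarrow> t \<in> {a, b}"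
        using merge_eq_c_iff st(3) by metis
      moreover have "s \<in> {a, b} \<Longrightarrow> t \<in> {a, b} \<Longrightarrow> s = t" using st False by auto
      ultimately show "s = t" using st(3) merge_other by metis
    qed
    then show ?thesis using dist by (simp add: distinct_map remdups_adj_distinct)
  qed
qed

lemma gam_merge:
  assumes x: "x \<in> cells T" and y: "y \<in> cells T"
  shows "gam T' (\<phi> x) (\<phi> y) = remdups_adj (map \<phi> (gam T x y))"
proof -
  define p where "p = gam T x y"
  have p: "is_path (cells T) (dE T) p" "hd p = x" "last p = y"
    using gam[OF T x y] unfolding p_def by auto
  then have ne: "p \<noteq> []" unfolding is_path_def by simp
  have "successively (\<lambda>s t. (s = t \<or> {s, t} \<in> dE T') \<and> s \<noteq> t) (remdups_adj (map \<phi> p))"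
    using successively_remdups_adj_iff[THEN iffD2, OF _ map_merge_path[OF p(1)]]
      distinct_adj_remdups_adj[unfolded distinct_adj_def]
    by (intro successively_conj) auto
  then have "successively (\<lambda>s t. {s, t} \<in> dE T') (remdups_adj (map \<phi> p))"
    by (rule successively_mono) auto
  moreover have "set (remdups_adj (map \<phi> p)) \<subseteq> cells T'"
    using p(1) cells_T' unfolding is_path_def by auto
  ultimately have "is_path (cells T') (dE T') (remdups_adj (map \<phi> p))"
    using ne distinct_remdups_adj_map_merge_path[OF p(1)] by (intro is_path_if_distinct) auto
  then show ?thesis
    using gam_of_path[OF T'] p ne unfolding p_def by (simp add: hd_map last_map)
qed

lemma edge_off_ab:
  assumes "\<epsilon> \<in> dE T" "\<epsilon> \<noteq> {a, b}"
  obtains x z where "\<epsilon> = {x, z}" "x \<notin> {a, b}" "x \<noteq> z" "x \<in> cells T" "z \<in> cells T"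
proof -
  obtain u w where uw: "u \<noteq> w" "\<epsilon> = {u, w}" using t.edge_doubleton[OF assms(1)] by blast
  then have "u \<notin> {a, b} \<or> w \<notin> {a, b}" using assms(2) by auto
  then show ?thesis
    using that uw t.edge_subset[OF assms(1)] by (metis insert_commute insert_subset)
qed

lemma no_common_neighbour: "{x, a} \<in> dE T \<Longrightarrow> {x, b} \<in> dE T \<Longrightarrow> False"
  using t.path_neighbour_unique[OF t.edge_path[OF edge_ab], of x a b] a_neq_b
    t.edge_ends_neq by auto

lemma merge_mem_image_iff:
  "P \<subseteq> cells T \<Longrightarrow> z \<in> cells T \<Longrightarrow> z \<notin> {a, b} \<Longrightarrow> z \<in> \<phi> ` P \<longleftrightarrow> z \<in> P"
  using c_neq merge_other by (auto simp: image_iff) (metis insertCI merge_a merge_b)+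

lemma c_mem_image_iff: "P \<subseteq> cells T \<Longrightarrow> c \<in> \<phi> ` P \<longleftrightarrow> a \<in> P \<or> b \<in> P"
  using c_neq merge_other by (auto simp: image_iff) (metis insertCI merge_a merge_b subsetD)+

lemma inj_on_image_merge: "inj_on (image \<phi>) (dE T - {{a, b}})"
proof
  fix e1 e2 assume e1: "e1 \<in> dE T - {{a, b}}" and e2: "e2 \<in> dE T - {{a, b}}"
    and eq: "\<phi> ` e1 = \<phi> ` e2"
  obtain x1 z1 where 1: "e1 = {x1, z1}" "x1 \<notin> {a, b}" "x1 \<in> cells T" "z1 \<in> cells T"
    using edge_off_ab e1 by blast
  obtain x2 z2 where 2: "e2 = {x2, z2}" "x2 \<notin> {a, b}" "x2 \<in> cells T" "z2 \<in> cells T"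
    using edge_off_ab e2 by blast
  have images: "\<phi> ` e1 = {x1, \<phi> z1}" "\<phi> ` e2 = {x2, \<phi> z2}"
    using 1 2 merge_other by auto
  have x_neq_c: "x1 \<noteq> c" "x2 \<noteq> c" using c_neq 1 2 by auto
  show "e1 = e2"
  proof (cases "z1 \<in> {a, b}")
    case False
    then have "z2 \<notin> {a, b}"
      using eq images x_neq_c merge_eq_c_iff 1 2 by (metis doubleton_eq_iff)
    then show ?thesis using False eq images 1 2 merge_other by auto
  next
    case True
    then have "z2 \<in> {a, b}" "x1 = x2"
      using eq images x_neq_c merge_eq_c_iff 1 2 by (metis doubleton_eq_iff)+
    moreover have "{x1, z1} \<in> dE T" "{x2, z2} \<in> dE T" using e1 e2 1 2 by auto
    ultimately show ?thesis
      using True 1 2 no_common_neighbour by (metis insertE singletonD)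
  qed
qed

lemma far_boundary_edge_merge:
  assumes p: "is_path (cells T) (dE T) p"
    and \<epsilon>: "\<epsilon> \<in> boundary_edges_at T (set p) (- {a, b})"
  shows "\<phi> ` \<epsilon> \<in> boundary_edges_at T' (\<phi> ` set p) (- {c})" "\<epsilon> \<noteq> {a, b}"
    "dq T' (\<phi> ` \<epsilon>) (inner_end (\<phi> ` set p) (\<phi> ` \<epsilon>)) = dq T \<epsilon> (inner_end (set p) \<epsilon>)"
proof -
  have P: "set p \<subseteq> cells T" using p unfolding is_path_def by simp
  obtain u w where uw: "\<epsilon> = {u, w}" "u \<in> set p" "w \<notin> set p" "inner_end (set p) \<epsilon> = u"
    using \<epsilon> boundary_edge_ends[OF T] unfolding boundary_edges_at_def by blast
  have \<epsilon>E: "\<epsilon> \<in> dE T" and u: "u \<notin> {a, b}"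
    using \<epsilon> uw unfolding boundary_edges_at_def boundary_edges_def by auto
  then have cells: "u \<in> cells T" "w \<in> cells T" using t.edge_subset uw by auto
  have "\<phi> w \<notin> \<phi> ` set p"
  proof (cases "w \<in> {a, b}")
    case False
    then show ?thesis using merge_mem_image_iff[OF P cells(2)] uw merge_other by auto
  next
    case True
    \<comment> \<open>otherwise w would have two neighbours on the path\<close>
    have "a \<notin> set p \<and> b \<notin> set p"
    proof (rule ccontr)
      assume "\<not> (a \<notin> set p \<and> b \<notin> set p)"
      then obtain s where s: "{w, s} = {a, b}" "s \<in> set p" using True uw by auto
      then have "s = u"
        using t.path_neighbour_unique[OF p uw(3), of s u] edge_ab \<epsilon>E uw by (simp add: insert_commute)
      then show False using s u by auto
    qed
    then show ?thesis using True c_mem_image_iff[OF P] by auto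
  qed
  moreover have "\<phi> u = u" using u merge_other by simp
  moreover then have "u \<in> \<phi> ` set p" using uw(2) by (metis image_eqI)
  moreover have far: "\<epsilon> \<in> dE T - {{a, b}}" using \<epsilon>E u uw by auto
  then have "\<phi> ` \<epsilon> \<in> dE T'" unfolding edges_T' by blast
  ultimately have "\<phi> ` \<epsilon> \<in> boundary_edges T' (\<phi> ` set p)" and inner: "inner_end (\<phi> ` set p) (\<phi> ` \<epsilon>) = u"
    using uw(1) boundary_edgeI[of u "\<phi> w" T' "\<phi> ` set p"] inner_end_eq[of _ u "\<phi> w"] by auto
  then show "\<phi> ` \<epsilon> \<in> boundary_edges_at T' (\<phi> ` set p) (- {c})"
    using c_neq[OF cells(1) u] by (simp add: boundary_edges_at_def)
  show "\<epsilon> \<noteq> {a, b}" using far by simp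
  show "dq T' (\<phi> ` \<epsilon>) (inner_end (\<phi> ` set p) (\<phi> ` \<epsilon>)) = dq T \<epsilon> (inner_end (set p) \<epsilon>)"
    using dq_far_end[rule_format, OF far, of u] inner uw u by simp
qed

lemma far_boundary_edges_merge:
  assumes p: "is_path (cells T) (dE T) p"
  shows "boundary_edges_at T' (\<phi> ` set p) (- {c}) = image \<phi> ` boundary_edges_at T (set p) (- {a, b})"
proof
  show "image \<phi> ` boundary_edges_at T (set p) (- {a, b}) \<subseteq> boundary_edges_at T' (\<phi> ` set p) (- {c})"
    using far_boundary_edge_merge[OF p] by blast
next
  have P: "set p \<subseteq> cells T" using p unfolding is_path_def by simp
  show "boundary_edges_at T' (\<phi> ` set p) (- {c}) \<subseteq> image \<phi> ` boundary_edges_at T (set p) (- {a, b})"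
  proof
    fix \<epsilon>' assume \<epsilon>': "\<epsilon>' \<in> boundary_edges_at T' (\<phi> ` set p) (- {c})"
    then obtain \<epsilon> where \<epsilon>: "\<epsilon> \<in> dE T - {{a, b}}" "\<epsilon>' = \<phi> ` \<epsilon>"
      unfolding boundary_edges_at_def boundary_edges_def edges_T' by blast
    obtain v w' where vw': "\<epsilon>' = {v, w'}" "v \<in> \<phi> ` set p" "w' \<notin> \<phi> ` set p"
      "inner_end (\<phi> ` set p) \<epsilon>' = v"
      using \<epsilon>' boundary_edge_ends[OF T'] unfolding boundary_edges_at_def by blast
    have "v \<noteq> c" using \<epsilon>' vw' unfolding boundary_edges_at_def by auto
    have "v \<in> \<phi> ` \<epsilon>" using \<epsilon> vw' by auto
    then obtain s where s: "s \<in> \<epsilon>" "\<phi> s = v" by blast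
    then have "s \<notin> {a, b}" using \<open>v \<noteq> c\<close> by auto
    then have "v = s" using s merge_other by simp
    obtain t where st: "\<epsilon> = {s, t}" using t.edge_other_end \<epsilon> s(1) by blast
    have "s \<in> cells T" using t.edge_subset \<epsilon> s by auto
    then have "s \<in> set p"
      using merge_mem_image_iff[OF P _ \<open>s \<notin> {a, b}\<close>] vw'(2) \<open>v = s\<close> by blast
    moreover have "\<phi> ` \<epsilon> = {s, \<phi> t}" using st s \<open>v = s\<close> by simp
    then have "w' = \<phi> t" using vw' \<epsilon>(2) \<open>v = s\<close> by (metis doubleton_eq_iff)
    then have "t \<notin> set p" using vw'(3) by auto
    ultimately have "{s, t} \<in> boundary_edges T (set p)" "inner_end (set p) {s, t} = s"
      using \<epsilon> st by (auto intro: boundary_edgeI inner_end_eq)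
    then have "\<epsilon> \<in> boundary_edges_at T (set p) (- {a, b})"
      using st \<open>s \<notin> {a, b}\<close> by (simp add: boundary_edges_at_def)
    then show "\<epsilon>' \<in> image \<phi> ` boundary_edges_at T (set p) (- {a, b})" using \<epsilon> by blast
  qed
qed

lemma inner_dq_prod_far_boundary_edges_merge:
  assumes p: "is_path (cells T) (dE T) p"
  shows "inner_dq_prod T' (\<phi> ` set p) (boundary_edges_at T' (\<phi> ` set p) (- {c})) =
    inner_dq_prod T (set p) (boundary_edges_at T (set p) (- {a, b}))"
proof -
  let ?far = "boundary_edges_at T (set p) (- {a, b})"
  have "?far \<subseteq> dE T - {{a, b}}"
    using far_boundary_edge_merge(2)[OF p]
    unfolding boundary_edges_at_def boundary_edges_def by blast
  then have "inj_on (image \<phi>) ?far" using inj_on_image_merge inj_on_subset by blast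
  then show ?thesis
    unfolding far_boundary_edges_merge[OF p] inner_dq_prod_def
    by (simp add: prod.reindex far_boundary_edge_merge(3)[OF p])
qed

definition side_edges_out :: "'a \<Rightarrow> 'a \<Rightarrow> 'a set \<Rightarrow> 'a set set" where
  "side_edges_out s s' P = {\<epsilon> \<in> side_edges T s s'. \<not> \<epsilon> - {s} \<subseteq> P}"

lemma side_edge:
  assumes ss': "{s, s'} = {a, b}" and \<epsilon>: "\<epsilon> \<in> side_edges T s s'"
  obtains x where "\<epsilon> = {s, x}" "x \<notin> {a, b}" "x \<in> cells T" "\<epsilon> \<in> dE T - {{a, b}}"
proof -
  have \<epsilon>E: "\<epsilon> \<in> dE T" "s \<in> \<epsilon>" "\<epsilon> \<noteq> {s, s'}" using \<epsilon> unfolding side_edges_def by auto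
  obtain x where x: "\<epsilon> = {s, x}" "x \<noteq> s" using t.edge_other_end \<epsilon>E by metis
  then have "x \<notin> {a, b}" using \<epsilon>E(3) ss' by auto
  moreover have "x \<in> cells T" using t.edge_subset \<epsilon>E(1) x by auto
  ultimately show ?thesis using that x \<epsilon>E ss' by auto
qed

lemma finite_side_edges: "finite (side_edges T s s')"
  using t.finite_edges unfolding side_edges_def by simp

lemma side_edges_disjoint: "side_edges T a b \<inter> side_edges T b a = {}"
  using t.edge_doubleton a_neq_b unfolding side_edges_def by (fastforce simp: insert_commute)

lemma side_edges_subset: "side_edges T a b \<union> side_edges T b a \<subseteq> dE T - {{a, b}}"
  unfolding side_edges_def by (auto simp: insert_commute)

lemma finite_side_edges_out: "finite (side_edges_out s s' P)"
  using finite_side_edges unfolding side_edges_out_def by simp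

lemma side_edges_out_disjoint: "side_edges_out a b P \<inter> side_edges_out b a P = {}"
  using side_edges_disjoint unfolding side_edges_out_def by blast

lemma side_edges_out_subset: "side_edges_out a b P \<union> side_edges_out b a P \<subseteq> dE T - {{a, b}}"
  using side_edges_subset unfolding side_edges_out_def by blast

lemma side_edge_out:
  assumes ss': "{s, s'} = {a, b}" and \<epsilon>: "\<epsilon> \<in> side_edges_out s s' P"
  obtains x where "\<epsilon> = {s, x}" "x \<notin> {a, b}" "x \<notin> P" "x \<in> cells T" "\<epsilon> \<in> dE T - {{a, b}}"
proof -
  obtain x where x: "\<epsilon> = {s, x}" "x \<notin> {a, b}" "x \<in> cells T" "\<epsilon> \<in> dE T - {{a, b}}"
    using side_edge[OF ss'] \<epsilon> unfolding side_edges_out_def by blast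
  moreover have "x \<notin> P" using \<epsilon> x unfolding side_edges_out_def by auto
  ultimately show ?thesis using that by blast
qed

lemma near_boundary_edges_merge:
  assumes P: "P \<subseteq> cells T" and cP: "c \<in> \<phi> ` P"
  shows "boundary_edges_at T' (\<phi> ` P) {c} = image \<phi> ` (side_edges_out a b P \<union> side_edges_out b a P)"
proof
  show "image \<phi> ` (side_edges_out a b P \<union> side_edges_out b a P) \<subseteq> boundary_edges_at T' (\<phi> ` P) {c}"
  proof
    fix \<epsilon>' assume "\<epsilon>' \<in> image \<phi> ` (side_edges_out a b P \<union> side_edges_out b a P)"
    then obtain \<epsilon> where \<epsilon>: "\<epsilon>' = \<phi> ` \<epsilon>" "\<epsilon> \<in> side_edges_out a b P \<or> \<epsilon> \<in> side_edges_out b a P"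
      by blast
    then obtain s s' where \<epsilon>: "\<epsilon>' = \<phi> ` \<epsilon>" "\<epsilon> \<in> side_edges_out s s' P" "{s, s'} = {a, b}"
      using insert_commute[of b a "{}"] by blast
    then obtain x where x: "\<epsilon> = {s, x}" "x \<notin> {a, b}" "x \<notin> P" "x \<in> cells T" "\<epsilon> \<in> dE T - {{a, b}}"
      using side_edge_out[OF \<epsilon>(3,2)] by blast
    have "\<phi> s = c" using \<epsilon>(3) by (auto simp: doubleton_eq_iff)
    then have "\<epsilon>' = {c, x}" using \<epsilon> x merge_other by simp
    moreover have "x \<notin> \<phi> ` P" using merge_mem_image_iff[OF P x(4,2)] x(3) by simp
    moreover have "\<epsilon>' \<in> dE T'" using \<epsilon> x unfolding edges_T' by blast
    ultimately show "\<epsilon>' \<in> boundary_edges_at T' (\<phi> ` P) {c}"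
      using cP boundary_edgeI[of c x T'] inner_end_eq[of _ c x] by (simp add: boundary_edges_at_def)
  qed
next
  show "boundary_edges_at T' (\<phi> ` P) {c} \<subseteq> image \<phi> ` (side_edges_out a b P \<union> side_edges_out b a P)"
  proof
    fix \<epsilon>' assume \<epsilon>': "\<epsilon>' \<in> boundary_edges_at T' (\<phi> ` P) {c}"
    then obtain \<epsilon> where \<epsilon>: "\<epsilon> \<in> dE T - {{a, b}}" "\<epsilon>' = \<phi> ` \<epsilon>"
      unfolding boundary_edges_at_def boundary_edges_def edges_T' by blast
    obtain x z where xz: "\<epsilon> = {x, z}" "x \<notin> {a, b}" "x \<noteq> z" "x \<in> cells T" "z \<in> cells T"
      using edge_off_ab \<epsilon> by blast
    have "\<epsilon>' \<in> boundary_edges T' (\<phi> ` P)" "inner_end (\<phi> ` P) \<epsilon>' = c"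
      using \<epsilon>' unfolding boundary_edges_at_def by auto
    then obtain w' where "\<epsilon>' = {c, w'}" "w' \<notin> \<phi> ` P"
      using boundary_edge_ends[OF T' \<open>\<epsilon>' \<in> boundary_edges T' (\<phi> ` P)\<close>] by metis
    moreover have "\<epsilon>' = {x, \<phi> z}" "x \<noteq> c" using \<epsilon> xz merge_other c_neq by auto
    ultimately have "\<phi> z = c" "x \<notin> \<phi> ` P" by (auto simp: doubleton_eq_iff)
    then have "z \<in> {a, b}" "x \<notin> P"
      using merge_eq_c_iff[OF xz(5)] merge_mem_image_iff[OF P xz(4,2)] by auto
    then have "\<epsilon> \<in> side_edges_out z s' P" if "{z, s'} = {a, b}" for s'
      using that \<epsilon> xz unfolding side_edges_out_def side_edges_def by auto
    then have "\<epsilon> \<in> side_edges_out a b P \<union> side_edges_out b a P"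
      using \<open>z \<in> {a, b}\<close> by (auto simp: insert_commute)
    then show "\<epsilon>' \<in> image \<phi> ` (side_edges_out a b P \<union> side_edges_out b a P)" using \<epsilon> by blast
  qed
qed

lemma inner_dq_prod_near_boundary_edges_merge:
  assumes P: "P \<subseteq> cells T" and cP: "c \<in> \<phi> ` P"
  shows "inner_dq_prod T' (\<phi> ` P) (boundary_edges_at T' (\<phi> ` P) {c}) =
    (\<Prod>\<epsilon>\<in>side_edges_out a b P. dq T' (\<phi> ` \<epsilon>) c) * (\<Prod>\<epsilon>\<in>side_edges_out b a P. dq T' (\<phi> ` \<epsilon>) c)"
proof -
  let ?S = "side_edges_out a b P \<union> side_edges_out b a P"
  have "inj_on (image \<phi>) ?S" using inj_on_subset[OF inj_on_image_merge side_edges_out_subset] .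
  moreover have "inner_end (\<phi> ` P) (\<phi> ` \<epsilon>) = c" if "\<epsilon> \<in> ?S" for \<epsilon>
    using that near_boundary_edges_merge[OF P cP] unfolding boundary_edges_at_def by blast
  ultimately have "inner_dq_prod T' (\<phi> ` P) (boundary_edges_at T' (\<phi> ` P) {c}) =
      (\<Prod>\<epsilon>\<in>?S. dq T' (\<phi> ` \<epsilon>) c)"
    unfolding near_boundary_edges_merge[OF P cP] inner_dq_prod_def
    by (simp add: prod.reindex)
  also have "\<dots> = (\<Prod>\<epsilon>\<in>side_edges_out a b P. dq T' (\<phi> ` \<epsilon>) c) * (\<Prod>\<epsilon>\<in>side_edges_out b a P. dq T' (\<phi> ` \<epsilon>) c)"
    by (rule prod.union_disjoint[OF finite_side_edges_out finite_side_edges_out side_edges_out_disjoint])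
  finally show ?thesis .
qed

lemma side_edge_out_boundary:
  assumes "{s, s'} = {a, b}" "s \<in> P" "\<epsilon> \<in> side_edges_out s s' P"
  shows "\<epsilon> \<in> boundary_edges_at T P {a, b}" "inner_end P \<epsilon> = s"
proof -
  obtain x where "\<epsilon> = {s, x}" "x \<notin> P" "\<epsilon> \<in> dE T"
    using side_edge_out[OF assms(1,3)] by blast
  then show "\<epsilon> \<in> boundary_edges_at T P {a, b}" "inner_end P \<epsilon> = s"
    using assms boundary_edgeI[of s x T P] inner_end_eq[of _ s x P] by (auto simp: boundary_edges_at_def)
qed

lemma boundary_edge_at_ab:
  assumes \<epsilon>: "\<epsilon> \<in> boundary_edges_at T P {a, b}" "\<epsilon> \<noteq> {a, b}"
  obtains s s' where "{s, s'} = {a, b}" "s \<in> P" "\<epsilon> \<in> side_edges_out s s' P" "inner_end P \<epsilon> = s"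
proof -
  obtain u w where uw: "\<epsilon> = {u, w}" "u \<in> P" "w \<notin> P" "inner_end P \<epsilon> = u"
    using \<epsilon> boundary_edge_ends[OF T] unfolding boundary_edges_at_def by blast
  have "u \<in> {a, b}" using \<epsilon> uw unfolding boundary_edges_at_def by auto
  then obtain s' where s': "{u, s'} = {a, b}" by (auto simp: insert_commute)
  have "\<epsilon> \<in> side_edges_out u s' P"
    using \<epsilon> uw s' unfolding boundary_edges_at_def boundary_edges_def side_edges_out_def side_edges_def
    by auto
  then show ?thesis using that s' uw by blast
qed

lemma inner_dq_prod_near_boundary_edges_both:
  assumes "a \<in> P" "b \<in> P"
  shows "inner_dq_prod T P (boundary_edges_at T P {a, b}) =
    (\<Prod>\<epsilon>\<in>side_edges_out a b P. dq T \<epsilon> a) * (\<Prod>\<epsilon>\<in>side_edges_out b a P. dq T \<epsilon> b)"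
proof -
  have ab: "{a, b} = {a, b}" "{b, a} = {a, b}" by auto
  have "boundary_edges_at T P {a, b} = side_edges_out a b P \<union> side_edges_out b a P"
  proof (intro subset_antisym subsetI)
    fix \<epsilon> assume \<epsilon>: "\<epsilon> \<in> boundary_edges_at T P {a, b}"
    moreover have "\<epsilon> \<noteq> {a, b}"
      using \<epsilon> assms unfolding boundary_edges_at_def boundary_edges_def by auto
    ultimately obtain s s' where "{s, s'} = {a, b}" "\<epsilon> \<in> side_edges_out s s' P"
      using boundary_edge_at_ab by metis
    then show "\<epsilon> \<in> side_edges_out a b P \<union> side_edges_out b a P"
      by (auto simp: doubleton_eq_iff)
  next
    fix \<epsilon> assume "\<epsilon> \<in> side_edges_out a b P \<union> side_edges_out b a P"
    then show "\<epsilon> \<in> boundary_edges_at T P {a, b}"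
      using side_edge_out_boundary(1)[OF ab(1) assms(1)] side_edge_out_boundary(1)[OF ab(2) assms(2)]
      by blast
  qed
  then have "inner_dq_prod T P (boundary_edges_at T P {a, b}) =
    inner_dq_prod T P (side_edges_out a b P) * inner_dq_prod T P (side_edges_out b a P)"
    unfolding inner_dq_prod_def
    by (simp add: prod.union_disjoint[OF finite_side_edges_out finite_side_edges_out side_edges_out_disjoint])
  then show ?thesis
    unfolding inner_dq_prod_def
    using side_edge_out_boundary(2)[OF ab(1) assms(1)] side_edge_out_boundary(2)[OF ab(2) assms(2)]
    by simp
qed

lemma inner_dq_prod_near_boundary_edges_one:
  assumes ss': "{s, s'} = {a, b}" and "s \<in> P" "s' \<notin> P"
  shows "inner_dq_prod T P (boundary_edges_at T P {a, b}) =
    dq T {a, b} s * (\<Prod>\<epsilon>\<in>side_edges_out s s' P. dq T \<epsilon> s)"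
proof -
  have ab: "{a, b} \<in> boundary_edges_at T P {a, b}" "inner_end P {a, b} = s"
    using assms edge_ab boundary_edgeI[of s s' T P] inner_end_eq[of "{a, b}" s s' P]
    by (auto simp: boundary_edges_at_def)
  have "boundary_edges_at T P {a, b} = insert {a, b} (side_edges_out s s' P)"
  proof (intro subset_antisym subsetI)
    fix \<epsilon> assume \<epsilon>: "\<epsilon> \<in> boundary_edges_at T P {a, b}"
    show "\<epsilon> \<in> insert {a, b} (side_edges_out s s' P)"
    proof (cases "\<epsilon> = {a, b}")
      case False
      then obtain t t' where "{t, t'} = {a, b}" "t \<in> P" "\<epsilon> \<in> side_edges_out t t' P"
        using boundary_edge_at_ab \<epsilon> by metis
      then show ?thesis using ss' assms by (auto simp: doubleton_eq_iff)
    qed simp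
  next
    fix \<epsilon> assume "\<epsilon> \<in> insert {a, b} (side_edges_out s s' P)"
    then show "\<epsilon> \<in> boundary_edges_at T P {a, b}"
      using ab side_edge_out_boundary(1)[OF ss' assms(2)] by blast
  qed
  moreover have "{a, b} \<notin> side_edges_out s s' P"
    using ss' unfolding side_edges_out_def side_edges_def by auto
  ultimately show ?thesis
    unfolding inner_dq_prod_def
    using ab(2) side_edge_out_boundary(2)[OF ss' assms(2)] finite_side_edges_out by simp
qed

lemma side_edges_out_eq_side_edges:
  assumes p: "is_path (cells T) (dE T) p" and ss': "{s, s'} = {a, b}"
    and "s \<in> set p" "s' \<notin> set p"
  shows "side_edges_out s' s (set p) = side_edges T s' s"
proof -
  have "\<not> \<epsilon> - {s'} \<subseteq> set p" if \<epsilon>: "\<epsilon> \<in> side_edges T s' s" for \<epsilon>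
  proof
    assume sub: "\<epsilon> - {s'} \<subseteq> set p"
    have s's: "{s', s} = {a, b}" using ss' by (simp add: insert_commute)
    obtain x where x: "\<epsilon> = {s', x}" "x \<notin> {a, b}" "x \<in> cells T" "\<epsilon> \<in> dE T - {{a, b}}"
      by (rule side_edge[OF s's \<epsilon>])
    then have "x \<in> set p" using sub ss' by auto
    moreover have "{s', s} \<in> dE T" using s's edge_ab by simp
    ultimately have "x = s" using t.path_neighbour_unique[OF p assms(4), of x s] x assms(3) by simp
    then show False using x ss' by auto
  qed
  then show ?thesis unfolding side_edges_out_def by auto
qed

lemma prod_side_edges_out_a:
  assumes p: "is_path (cells T) (dE T) p"
    and a_cond: "merge_compatible T T' a b c \<or> (val T a = 2 \<and> a \<in> set p \<and> a \<noteq> hd p \<and> a \<noteq> last p)"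
  shows "(\<Prod>\<epsilon>\<in>side_edges_out a b (set p). dq T' (\<phi> ` \<epsilon>) c) = (\<Prod>\<epsilon>\<in>side_edges_out a b (set p). dq T \<epsilon> a)"
  using a_cond
proof
  assume "merge_compatible T T' a b c"
  then show ?thesis
    unfolding merge_compatible_def side_edges_out_def by (intro prod.cong) auto
next
  assume a: "val T a = 2 \<and> a \<in> set p \<and> a \<noteq> hd p \<and> a \<noteq> last p"
  have "\<epsilon> \<subseteq> set p" if "\<epsilon> \<in> side_edges T a b" for \<epsilon>
    using that a t.interior_edge_subset_path[OF p] unfolding side_edges_def val_def by blast
  then have "side_edges_out a b (set p) = {}" unfolding side_edges_out_def by blast
  then show ?thesis by simp
qed

lemma prod_side_edges_out_b:
  "(\<Prod>\<epsilon>\<in>side_edges_out b a P. dq T' (\<phi> ` \<epsilon>) c) = (\<Prod>\<epsilon>\<in>side_edges_out b a P. dq T \<epsilon> b)"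
  using dq_b_side side_edges_out_subset unfolding side_edges_out_def side_edges_def
  by (intro prod.cong) auto

lemma merge_compatible_if_path_leaves_at_a:
  assumes p: "is_path (cells T) (dE T) p" and "a \<in> set p" "b \<notin> set p"
    and a_cond: "merge_compatible T T' a b c \<or> (a \<noteq> hd p \<and> a \<noteq> last p)"
  shows "merge_compatible T T' a b c"
proof (rule ccontr)
  assume "\<not> merge_compatible T T' a b c"
  then have "val T a = 2" "a \<noteq> hd p" "a \<noteq> last p" using a_cond a_side by auto
  then have "{a, b} \<subseteq> set p"
    using t.interior_edge_subset_path[OF p] assms(2) edge_ab unfolding val_def by blast
  then show False using assms(3) by simp
qed

lemma val_b_if_path_leaves_at_b:
  assumes p: "is_path (cells T) (dE T) p" "hd p \<noteq> last p" and "a \<notin> set p" "b \<in> set p"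
  shows "val T b \<noteq> 1"
proof
  assume "val T b = 1"
  then have "{a, b} \<subseteq> set p"
    using t.leaf_edge_subset_path[OF p] assms(4) edge_ab unfolding val_def by blast
  then show False using assms(3) by simp
qed

text \<open>This is where the decoration hypotheses of the contraction enter.\<close>

lemma inner_dq_prod_near_boundary_edges_eq:
  assumes p: "is_path (cells T) (dE T) p" and hl: "hd p \<noteq> last p"
    and a_cond: "merge_compatible T T' a b c \<or> (a \<noteq> hd p \<and> a \<noteq> last p)"
  shows "inner_dq_prod T' (\<phi> ` set p) (boundary_edges_at T' (\<phi> ` set p) {c}) =
    inner_dq_prod T (set p) (boundary_edges_at T (set p) {a, b})"
proof -
  let ?P = "set p"
  let ?g = "\<lambda>S. \<Prod>\<epsilon>\<in>S. dq T' (\<phi> ` \<epsilon>) c"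
  have P: "?P \<subseteq> cells T" using p unfolding is_path_def by simp
  have ab: "{a, b} = {a, b}" "{b, a} = {a, b}" by auto
  consider "a \<notin> ?P" "b \<notin> ?P" | "a \<in> ?P" "b \<in> ?P" | "a \<in> ?P" "b \<notin> ?P" | "a \<notin> ?P" "b \<in> ?P"
    by blast
  then show ?thesis
  proof cases
    case 1
    then show ?thesis
      using c_mem_image_iff[OF P] boundary_edges_at_empty[OF T] boundary_edges_at_empty[OF T']
      by (simp add: inner_dq_prod_def)
  next
    case 2
    then have "?g (side_edges_out a b ?P) = (\<Prod>\<epsilon>\<in>side_edges_out a b ?P. dq T \<epsilon> a)"
      using prod_side_edges_out_a[OF p] a_cond a_side by blast
    then show ?thesis
      using inner_dq_prod_near_boundary_edges_merge[OF P] inner_dq_prod_near_boundary_edges_both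
        c_mem_image_iff[OF P] prod_side_edges_out_b 2 by simp
  next
    case 3
    then have compatible: "merge_compatible T T' a b c"
      using merge_compatible_if_path_leaves_at_a[OF p] a_cond by blast
    then have "?g (side_edges_out a b ?P) = (\<Prod>\<epsilon>\<in>side_edges_out a b ?P. dq T \<epsilon> a)"
      using prod_side_edges_out_a[OF p] by blast
    moreover have "?g (side_edges_out b a ?P) = dq T {a, b} a"
      using compatible side_edges_out_eq_side_edges[OF p ab(1) 3] unfolding merge_compatible_def
      by simp
    ultimately show ?thesis
      using inner_dq_prod_near_boundary_edges_merge[OF P] inner_dq_prod_near_boundary_edges_one[OF ab(1) 3]
        c_mem_image_iff[OF P] 3 by simp
  next
    case 4
    then have "?g (side_edges_out a b ?P) = dq T {a, b} b"
      using val_b_if_path_leaves_at_b[OF p hl] b_side side_edges_out_eq_side_edges[OF p ab(2)] by simp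
    then show ?thesis
      using inner_dq_prod_near_boundary_edges_merge[OF P] inner_dq_prod_near_boundary_edges_one[OF ab(2) 4(2,1)]
        c_mem_image_iff[OF P] prod_side_edges_out_b 4 by simp
  qed
qed

lemma xx_merge:
  assumes x: "x \<in> cells T" and y: "y \<in> cells T" and xy: "\<phi> x \<noteq> \<phi> y"
    and a_cond: "merge_compatible T T' a b c \<or> (x \<noteq> a \<and> y \<noteq> a)"
    and f: "df T' (\<phi> y) = df T y"
  shows "xx T' (\<phi> x) (\<phi> y) = xx T x y"
proof -
  define p where "p = gam T x y"
  have p: "is_path (cells T) (dE T) p" "hd p = x" "last p = y"
    using gam[OF T x y] unfolding p_def by auto
  have "\<phi> x \<in> cells T'" "\<phi> y \<in> cells T'" using x y cells_T' by auto
  then have "xx T' (\<phi> x) (\<phi> y) = df T y * inner_dq_prod T' (\<phi> ` set p) (boundary_edges T' (\<phi> ` set p))"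
    using xx_eq_inner_dq_prod[OF T'] gam_merge[OF x y] f unfolding p_def by simp
  also have "\<dots> = df T y * inner_dq_prod T (set p) (boundary_edges T (set p))"
  proof -
    have "hd p \<noteq> last p" "merge_compatible T T' a b c \<or> (a \<noteq> hd p \<and> a \<noteq> last p)"
      using p xy a_cond by auto
    then show ?thesis
      unfolding inner_dq_prod_boundary_edges_split[OF t'.finite_edges, of _ "{c}"]
        inner_dq_prod_boundary_edges_split[OF t.finite_edges, of _ "{a, b}"]
      using inner_dq_prod_far_boundary_edges_merge[OF p(1)]
        inner_dq_prod_near_boundary_edges_eq[OF p(1)] by simp
  qed
  also have "\<dots> = xx T x y"
    using xx_eq_inner_dq_prod[OF T x y] unfolding p_def by simp
  finally show ?thesis .
qed

lemma val_merge: "val T' z = card {\<epsilon> \<in> dE T - {{a, b}}. z \<in> \<phi> ` \<epsilon>}"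
proof -
  have "{\<epsilon>' \<in> dE T'. z \<in> \<epsilon>'} = image \<phi> ` {\<epsilon> \<in> dE T - {{a, b}}. z \<in> \<phi> ` \<epsilon>}"
    unfolding edges_T' by (rule Compr_image_eq)
  moreover have "inj_on (image \<phi>) {\<epsilon> \<in> dE T - {{a, b}}. z \<in> \<phi> ` \<epsilon>}"
    by (rule inj_on_subset[OF inj_on_image_merge]) auto
  ultimately show ?thesis unfolding val_def valency_def by (simp add: card_image)
qed

lemma val_merge_other:
  assumes "z \<in> cells T" "z \<notin> {a, b}"
  shows "val T' z = val T z"
proof -
  have "{\<epsilon> \<in> dE T - {{a, b}}. z \<in> \<phi> ` \<epsilon>} = {\<epsilon> \<in> dE T. z \<in> \<epsilon>}"
    using assms merge_mem_image_iff[OF t.edge_subset] by auto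
  then show ?thesis using val_merge[of z] unfolding val_def valency_def by simp
qed

lemma val_eq_card_side_edges:
  assumes "{s, s'} = {a, b}"
  shows "val T s = card (side_edges T s s') + 1"
proof -
  have "{\<epsilon> \<in> dE T. s \<in> \<epsilon>} = insert {a, b} (side_edges T s s')"
    using assms edge_ab unfolding side_edges_def by auto
  moreover have "{a, b} \<notin> side_edges T s s'" using assms unfolding side_edges_def by auto
  ultimately show ?thesis unfolding val_def valency_def using finite_side_edges by simp
qed

lemma val_merge_c: "int (val T' c) - 2 = (int (val T a) - 2) + (int (val T b) - 2)"
proof -
  have "{\<epsilon> \<in> dE T - {{a, b}}. c \<in> \<phi> ` \<epsilon>} = side_edges T a b \<union> side_edges T b a"
    using c_mem_image_iff[OF t.edge_subset] unfolding side_edges_def by (auto simp: insert_commute)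
  then have "val T' c = card (side_edges T a b) + card (side_edges T b a)"
    unfolding val_merge using side_edges_disjoint finite_side_edges by (simp add: card_Un_disjoint)
  then show ?thesis
    using val_eq_card_side_edges[of a b] val_eq_card_side_edges[of b a] by (simp add: insert_commute)
qed

end

text \<open>The last assumption allows b to be an arrow of non-zero weight (and then c = b) only if
  a has valency 2, so that the term of a in M vanishes.\<close>

locale weight_preserving_contraction = edge_contraction +
  assumes keeps_f: "keeps_f T T'"
    and arrows_T': "dA T - A0 T \<subseteq> dA T'" "dA T' \<subseteq> dA T"
    and nonzero_arrows_fixed: "\<forall>\<alpha>\<in>dA T - A0 T. \<phi> \<alpha> = \<alpha>"
    and a_val_2_or_b: "val T a = 2 \<or> b \<notin> dA T - A0 T"
begin

lemma nonzero_arrows_T': "dA T' - A0 T' = dA T - A0 T"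
  using nonzero_arrows_eq[OF keeps_f arrows_T'] .

lemma df_nonzero_arrow: "\<alpha> \<in> dA T - A0 T \<Longrightarrow> df T' \<alpha> = df T \<alpha>"
  using keeps_f arrows_T' unfolding keeps_f_def by auto

lemma a_not_arrow: "a \<notin> dA T"
  using a_vertex decorated_tree_disjoint[OF T] by auto

lemma NN_merge:
  assumes x: "x \<in> cells T" "x \<notin> dA T - A0 T"
    and x_cond: "x = a \<Longrightarrow> merge_compatible T T' a b c \<and> b \<notin> dA T - A0 T"
  shows "NN T' (\<phi> x) = NN T x"
proof -
  have "xx T' (\<phi> x) \<alpha> = xx T x \<alpha>" if \<alpha>: "\<alpha> \<in> dA T - A0 T" for \<alpha>
  proof -
    have \<alpha>_fixed: "\<phi> \<alpha> = \<alpha>" and "\<alpha> \<noteq> a" and \<alpha>_cell: "\<alpha> \<in> cells T"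
      using \<alpha> nonzero_arrows_fixed a_not_arrow cells_arrow by auto
    moreover have "\<phi> x \<noteq> \<alpha>"
    proof
      assume "\<phi> x = \<alpha>"
      moreover have "x \<in> {a, b}"
        using calculation x(2) \<alpha> merge_other by (metis insertCI)
      ultimately have "\<alpha> = c" by auto
      then have "\<alpha> \<in> {a, b}" using merge_eq_c_iff[OF \<alpha>_cell] \<alpha>_fixed by simp
      then have "\<alpha> = b" using \<open>\<alpha> \<noteq> a\<close> by simp
      moreover have "x = a" using \<open>x \<in> {a, b}\<close> x(2) \<alpha> calculation by auto
      ultimately show False using x_cond \<alpha> by auto
    qed
    ultimately show ?thesis
      using xx_merge[OF x(1) \<alpha>_cell] x_cond df_nonzero_arrow[OF \<alpha>] by auto
  qed
  then show ?thesis unfolding NN_def nonzero_arrows_T' by simp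
qed

lemma vertices_zero_arrows_T':
  "dV T' \<union> A0 T' = \<phi> ` (dV T \<union> A0 T - {a})"
proof -
  let ?N = "dA T - A0 T"
  have cells_minus: "dV X \<union> A0 X = cells X - (dA X - A0 X)" if "decorated_tree X" for X :: "'a dtree"
    using decorated_tree_disjoint[OF that] unfolding cells_def A0_def by auto
  have "\<phi> ` cells T - ?N = \<phi> ` (cells T - ?N - {a})"
  proof (intro subset_antisym subsetI)
    fix z assume "z \<in> \<phi> ` cells T - ?N"
    then obtain w where w: "w \<in> cells T" "z = \<phi> w" "z \<notin> ?N" by blast
    show "z \<in> \<phi> ` (cells T - ?N - {a})"
    proof (cases "w = a")
      case True
      have "b \<notin> ?N"
      proof
        assume "b \<in> ?N"
        then have "\<phi> b = b" using nonzero_arrows_fixed by blast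
        then have "b = z" using True w by (simp add: merge_def)
        then show False using w \<open>b \<in> ?N\<close> by simp
      qed
      then show ?thesis using True w b_cell a_neq_b by (auto intro!: image_eqI[of _ _ b])
    next
      case False
      then show ?thesis using w nonzero_arrows_fixed by auto
    qed
  next
    fix z assume "z \<in> \<phi> ` (cells T - ?N - {a})"
    then obtain w where w: "w \<in> cells T" "w \<notin> ?N" "w \<noteq> a" "z = \<phi> w" by blast
    have "z \<notin> ?N"
    proof (cases "w = b")
      case True
      then show ?thesis
        using w merge_eq_c_iff[of c] a_not_arrow cells_arrow nonzero_arrows_fixed by force
    qed (use w merge_other in auto)
    then show "z \<in> \<phi> ` cells T - ?N" using w by auto
  qed
  then show ?thesis
    using cells_minus[OF T] cells_minus[OF T'] cells_T' nonzero_arrows_T' by simp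
qed

lemma inj_on_merge: "inj_on \<phi> (cells T - {a})"
proof (rule inj_onI)
  fix s t assume s: "s \<in> cells T - {a}" and t: "t \<in> cells T - {a}" and eq: "\<phi> s = \<phi> t"
  show "s = t"
  proof (cases "\<phi> s = c")
    case True
    then show ?thesis using s t eq merge_eq_c_iff by auto
  next
    case False
    then show ?thesis using s t eq merge_eq_c_iff merge_other by (metis DiffD1)
  qed
qed

lemma vertex_term_merge_other:
  assumes "z \<in> cells T" "z \<notin> dA T - A0 T" "z \<notin> {a, b}"
  shows "vertex_term T' (\<phi> z) = vertex_term T z"
  using NN_merge[OF assms(1,2)] merge_other[OF assms(3)] val_merge_other[OF assms(1,3)] assms(3)
  by (simp add: vertex_term_def)

lemma vertex_term_merge_c:
  assumes b: "b \<notin> dA T - A0 T"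
  shows "vertex_term T' c = vertex_term T a + vertex_term T b"
proof -
  have NN_b: "NN T' c = NN T b" using NN_merge[OF b_cell b] a_neq_b by simp
  show ?thesis
  proof (cases "val T a = 2")
    case True
    then show ?thesis using NN_b val_merge_c by (simp add: vertex_term_def)
  next
    case False
    then have "merge_compatible T T' a b c" using a_side by simp
    then have "NN T' c = NN T a" using NN_merge[OF a_cell] a_not_arrow b by simp
    then have "vertex_term T' c = NN T a * ((int (val T a) - 2) + (int (val T b) - 2))"
      using val_merge_c by (simp add: vertex_term_def)
    also have "\<dots> = NN T a * (int (val T a) - 2) + NN T b * (int (val T b) - 2)"
      using NN_b \<open>NN T' c = NN T a\<close> by (simp only: distrib_left)
    finally show ?thesis unfolding vertex_term_def .
  qed
qed

lemma MM_merge: "MM T' = MM T"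
proof -
  let ?S = "dV T \<union> A0 T"
  have S_cells: "?S \<subseteq> cells T" unfolding cells_def A0_def by auto
  have S: "?S \<subseteq> cells T" "\<And>z. z \<in> ?S \<Longrightarrow> z \<notin> dA T - A0 T" "a \<in> ?S" "finite ?S"
    using S_cells decorated_tree_disjoint[OF T] a_vertex finite_subset[OF S_cells t.finite_cells]
    unfolding A0_def by auto
  have "inj_on \<phi> (?S - {a})" by (rule inj_on_subset[OF inj_on_merge]) (use S(1) in auto)
  then have "MM T' = - (\<Sum>z\<in>?S - {a}. vertex_term T' (\<phi> z))"
    by (simp add: MM_eq_sum_vertex_term vertices_zero_arrows_T' sum.reindex)
  also have "\<dots> = - (\<Sum>z\<in>?S. vertex_term T z)"
  proof (cases "b \<in> ?S")
    case True
    have "(\<Sum>z\<in>?S - {a, b}. vertex_term T' (\<phi> z)) = (\<Sum>z\<in>?S - {a, b}. vertex_term T z)"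
      using S vertex_term_merge_other by (intro sum.cong) auto
    then have "(\<Sum>z\<in>?S - {a}. vertex_term T' (\<phi> z)) = vertex_term T' c + (\<Sum>z\<in>?S - {a, b}. vertex_term T z)"
      using True a_neq_b S by (simp add: sum.remove[of "?S - {a}" b] Diff_insert2[symmetric])
    also have "\<dots> = (\<Sum>z\<in>?S. vertex_term T z)"
      using True a_neq_b S vertex_term_merge_c[OF S(2)[OF True]]
      by (simp add: sum.remove[of ?S a] sum.remove[of "?S - {a}" b] Diff_insert2[symmetric])
    finally show ?thesis by simp
  next
    case False
    then have "val T a = 2" using a_val_2_or_b b_cell unfolding cells_def A0_def by auto
    then have "vertex_term T a = 0" by (simp add: vertex_term_def)
    moreover have "(\<Sum>z\<in>?S - {a}. vertex_term T' (\<phi> z)) = (\<Sum>z\<in>?S - {a}. vertex_term T z)"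
    proof (rule sum.cong[OF refl])
      fix z assume "z \<in> ?S - {a}"
      moreover then have "z \<notin> {a, b}" using False by auto
      ultimately show "vertex_term T' (\<phi> z) = vertex_term T z"
        using S vertex_term_merge_other by auto
    qed
    ultimately show ?thesis using sum.remove[OF S(4,3), of "vertex_term T"] by simp
  qed
  also have "\<dots> = MM T" by (simp add: MM_eq_sum_vertex_term)
  finally show ?thesis .
qed

lemma FF_merge: "FF T' = FF T"
proof -
  have "Farrow T' \<beta> = Farrow T \<beta>" if \<beta>: "\<beta> \<in> dA T - A0 T" for \<beta>
  proof -
    have "xx T' \<beta> \<gamma> = xx T \<beta> \<gamma>" if \<gamma>: "\<gamma> \<in> dA T - A0 T - {\<beta>}" for \<gamma>
    proof -
      have fixed: "\<phi> \<beta> = \<beta>" "\<phi> \<gamma> = \<gamma>" using nonzero_arrows_fixed \<beta> \<gamma> by auto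
      have "xx T' (\<phi> \<beta>) (\<phi> \<gamma>) = xx T \<beta> \<gamma>"
        by (rule xx_merge) (use \<beta> \<gamma> fixed cells_arrow a_not_arrow df_nonzero_arrow in auto)
      then show ?thesis using fixed by simp
    qed
    moreover have "\<beta> \<in> dA T'" using \<beta> arrows_T' by auto
    ultimately have "pp T' \<beta> (arrow_edge T' \<beta>) = pp T \<beta> (arrow_edge T \<beta>)"
      using pp_arrow_edge[OF T] pp_arrow_edge[OF T'] nonzero_arrows_T' \<beta> by simp
    then show ?thesis unfolding Farrow_def using df_nonzero_arrow \<beta> by simp
  qed
  then show ?thesis unfolding FF_def nonzero_arrows_T' by simp
qed

end

section \<open>The four operations are contractions\<close>

lemma (in tree) image_merge_edges:
  assumes "{a, b} \<in> X1"
  shows "image (merge a b c) ` (X1 - {{a, b}}) =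
    {\<epsilon> \<in> X1. a \<notin> \<epsilon> \<and> b \<notin> \<epsilon>} \<union> {{x, c} | x. \<exists>w\<in>{a, b}. {x, w} \<in> X1 \<and> x \<notin> {a, b}}"
proof -
  have touching: "\<exists>x w. \<epsilon> = {x, w} \<and> w \<in> {a, b} \<and> x \<notin> {a, b}"
    if "\<epsilon> \<in> X1" "\<epsilon> \<noteq> {a, b}" "a \<in> \<epsilon> \<or> b \<in> \<epsilon>" for \<epsilon>
    using edge_doubleton[OF that(1)] that(2,3) by (auto simp: doubleton_eq_iff)
  have merge_touching: "merge a b c ` {x, w} = {x, c}" if "w \<in> {a, b}" "x \<notin> {a, b}" for x w
    using that by (auto simp: merge_def)
  show ?thesis
  proof (intro subset_antisym subsetI)
    fix \<epsilon>' assume "\<epsilon>' \<in> image (merge a b c) ` (X1 - {{a, b}})"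
    then obtain \<epsilon> where \<epsilon>: "\<epsilon> \<in> X1" "\<epsilon> \<noteq> {a, b}" "\<epsilon>' = merge a b c ` \<epsilon>" by blast
    show "\<epsilon>' \<in> {\<epsilon> \<in> X1. a \<notin> \<epsilon> \<and> b \<notin> \<epsilon>} \<union> {{x, c} | x. \<exists>w\<in>{a, b}. {x, w} \<in> X1 \<and> x \<notin> {a, b}}"
    proof (cases "a \<in> \<epsilon> \<or> b \<in> \<epsilon>")
      case True
      then obtain x w where "\<epsilon> = {x, w}" "w \<in> {a, b}" "x \<notin> {a, b}" using touching \<epsilon> by blast
      then show ?thesis using \<epsilon> merge_touching by blast
    next
      case False
      then have "\<epsilon>' = \<epsilon>" using \<epsilon>(3) merge_image_id[of a \<epsilon> b c] by simp
      then show ?thesis using \<epsilon>(1) False by blast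
    qed
  next
    fix \<epsilon>' assume "\<epsilon>' \<in> {\<epsilon> \<in> X1. a \<notin> \<epsilon> \<and> b \<notin> \<epsilon>} \<union> {{x, c} | x. \<exists>w\<in>{a, b}. {x, w} \<in> X1 \<and> x \<notin> {a, b}}"
    then consider "\<epsilon>' \<in> X1" "a \<notin> \<epsilon>'" "b \<notin> \<epsilon>'"
      | x w where "\<epsilon>' = {x, c}" "w \<in> {a, b}" "{x, w} \<in> X1" "x \<notin> {a, b}"
      by blast
    then show "\<epsilon>' \<in> image (merge a b c) ` (X1 - {{a, b}})"
    proof cases
      case 1
      then show ?thesis using merge_image_id[of a \<epsilon>' b c] by (auto intro!: image_eqI[of _ _ \<epsilon>'])
    next
      case 2
      then show ?thesis using merge_touching[of w x] by (auto intro!: image_eqI[of _ _ "{x, w}"])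
    qed
  qed
qed

lemma leaf_removal_contraction:
  assumes T: "decorated_tree T" and T': "decorated_tree T'"
    and edge: "{v, z} \<in> dE T" and v: "v \<in> dV T" and z: "val T z = 1" "z \<notin> dA T - A0 T"
    and q: "dq T {v, z} v = 1"
    and cells: "cells T' = cells T - {z}" and edges: "dE T' = dE T - {{v, z}}"
    and keeps_q: "keeps_q_on (dE T') T T'" and keeps_f: "keeps_f T T'"
    and arrows: "dA T - A0 T \<subseteq> dA T'" "dA T' \<subseteq> dA T"
  shows "weight_preserving_contraction T T' v z v"
proof -
  interpret t: tree "cells T" "dE T" using decorated_tree_tree[OF T] .
  have "v \<noteq> z" using t.edge_ends_neq[OF edge] .
  have "v \<in> cells T" "z \<in> cells T" using t.edge_subset[OF edge] by auto
  have z_off: "z \<notin> \<epsilon>" if "\<epsilon> \<in> dE T - {{v, z}}" for \<epsilon>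
    using decorated_tree_leaf_edge[OF T z(1) edge] that by blast
  then have merge_fixes: "merge v z v ` \<epsilon> = \<epsilon>" if "\<epsilon> \<in> dE T - {{v, z}}" for \<epsilon>
    using that by (auto simp: merge_def)
  then have dq_T': "dq T' (merge v z v ` \<epsilon>) w = dq T \<epsilon> w" if "\<epsilon> \<in> dE T - {{v, z}}" "w \<in> \<epsilon>" for \<epsilon> w
    using that keeps_q edges unfolding keeps_q_on_def by auto
  have no_side_edges: "side_edges T z v = {}"
    using decorated_tree_leaf_edge[OF T z(1) edge] unfolding side_edges_def by (auto simp: insert_commute)
  show ?thesis
  proof unfold_locales
    show "cells T' = merge v z v ` cells T"
      using cells merge_image[OF \<open>v \<in> cells T\<close>] \<open>v \<in> cells T\<close> \<open>v \<noteq> z\<close> by auto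
    show "dE T' = image (merge v z v) ` (dE T - {{v, z}})"
      using edges merge_fixes by simp
    have "\<forall>\<epsilon>\<in>side_edges T v z. dq T' (merge v z v ` \<epsilon>) v = dq T \<epsilon> v"
      using dq_T' unfolding side_edges_def by auto
    then show "merge_compatible T T' v z v \<or> val T v = 2"
      using no_side_edges q unfolding merge_compatible_def by simp
    show "\<forall>\<alpha>\<in>dA T - A0 T. merge v z v \<alpha> = \<alpha>"
      using z v decorated_tree_disjoint[OF T] by (auto simp: merge_def)
  qed (use T T' edge v z dq_T' z_off keeps_f arrows in auto)
qed

lemma op_a_contraction:
  assumes T: "decorated_tree T" and T': "decorated_tree T'" and "op_a T T'"
  obtains a b c where "weight_preserving_contraction T T' a b c"
proof -
  obtain v \<alpha> where o: "v \<in> dV T" "\<alpha> \<in> A0 T" "{v, \<alpha>} \<in> dE T" "dq T {v, \<alpha>} v = 1"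
      "dV T' = dV T" "dA T' = dA T - {\<alpha>}" "dE T' = dE T - {{v, \<alpha>}}"
      "keeps_f T T'" "keeps_q_on (dE T') T T'"
    using assms(3) unfolding op_a_def by (elim exE conjE) (rule that; assumption)
  have "\<alpha> \<in> dA T" using o(2) unfolding A0_def by simp
  then have "\<alpha> \<notin> dV T" "val T \<alpha> = 1"
    using decorated_tree_disjoint[OF T] decorated_tree_arrow_val[OF T] by auto
  then have "weight_preserving_contraction T T' v \<alpha> v"
    using o by (intro leaf_removal_contraction[OF T T']) (auto simp: cells_def)
  then show ?thesis using that by blast
qed

lemma op_b_contraction:
  assumes T: "decorated_tree T" and T': "decorated_tree T'" and "op_b T T'"
  obtains a b c where "weight_preserving_contraction T T' a b c"
proof -
  obtain v t where o: "v \<in> dV T" "t \<in> dV T" "{v, t} \<in> dE T" "val T t = 1" "dq T {v, t} v = 1"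
      "dV T' = dV T - {t}" "dA T' = dA T" "dE T' = dE T - {{v, t}}"
      "keeps_f T T'" "keeps_q_on (dE T') T T'"
    using assms(3) unfolding op_b_def by (elim exE conjE) (rule that; assumption)
  have "t \<notin> dA T" using o(2) decorated_tree_disjoint[OF T] by auto
  then have "weight_preserving_contraction T T' v t v"
    using o by (intro leaf_removal_contraction[OF T T']) (auto simp: cells_def)
  then show ?thesis using that by blast
qed

lemma (in tree) merge_valency_2_vertex:
  assumes v: "valency X1 v = 2" "{v, u1} \<in> X1" "{v, u2} \<in> X1" "u1 \<noteq> u2"
  shows "\<epsilon> \<in> X1 - {{v, u1}, {v, u2}} \<Longrightarrow> merge v u1 u1 ` \<epsilon> = \<epsilon>"
    and "image (merge v u1 u1) ` (X1 - {{v, u1}}) = insert {u1, u2} (X1 - {{v, u1}, {v, u2}})"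
proof -
  have "v \<noteq> u2" using edge_ends_neq v(3) .
  show untouched: "merge v u1 u1 ` \<epsilon> = \<epsilon>" if "\<epsilon> \<in> X1 - {{v, u1}, {v, u2}}" for \<epsilon>
  proof -
    have "v \<notin> \<epsilon>" using that valency_2_edges[OF v] by blast
    then show ?thesis by (force simp: merge_def)
  qed
  have "X1 - {{v, u1}} = insert {v, u2} (X1 - {{v, u1}, {v, u2}})"
    using v(3,4) by (auto simp: doubleton_eq_iff)
  moreover have "merge v u1 u1 ` {v, u2} = {u1, u2}" using \<open>v \<noteq> u2\<close> v(4) by (auto simp: merge_def)
  ultimately show "image (merge v u1 u1) ` (X1 - {{v, u1}}) = insert {u1, u2} (X1 - {{v, u1}, {v, u2}})"
    using untouched by (simp add: image_iff)
qed

lemma op_c_contraction: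
  assumes T: "decorated_tree T" and T': "decorated_tree T'" and "op_c T T'"
  obtains a b c where "weight_preserving_contraction T T' a b c"
proof -
  obtain v u1 u2 where o: "v \<in> dV T" "val T v = 2" "{u1, v} \<in> dE T" "{v, u2} \<in> dE T" "u1 \<noteq> u2"
      "dV T' = dV T - {v}" "dA T' = dA T"
      "dE T' = (dE T - {{u1, v}, {v, u2}}) \<union> {{u1, u2}}"
      "keeps_f T T'" "keeps_q_on (dE T - {{u1, v}, {v, u2}}) T T'"
      "dq T' {u1, u2} u1 = dq T {u1, v} u1" "dq T' {u1, u2} u2 = dq T {v, u2} u2"
    using assms(3) unfolding op_c_def by (elim exE conjE) (rule that; assumption)
  interpret t: tree "cells T" "dE T" using decorated_tree_tree[OF T] .
  let ?\<phi> = "merge v u1 u1"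
  have e1: "{v, u1} \<in> dE T" using o(3) by (simp add: insert_commute)
  have "v \<noteq> u1" "v \<noteq> u2" "v \<notin> dA T"
    using t.edge_ends_neq e1 o(1,4) decorated_tree_disjoint[OF T] by auto
  have untouched: "?\<phi> ` \<epsilon> = \<epsilon>" if "\<epsilon> \<in> dE T - {{v, u1}, {v, u2}}" for \<epsilon>
    using t.merge_valency_2_vertex(1)[OF _ e1 o(4,5) that] o(2) unfolding val_def .
  have kept: "dq T' \<epsilon> w = dq T \<epsilon> w" if "\<epsilon> \<in> dE T - {{v, u1}, {v, u2}}" "w \<in> \<epsilon>" for \<epsilon> w
    using o(10) that unfolding keeps_q_on_def by (simp add: insert_commute)
  have moved: "?\<phi> ` {v, u2} = {u1, u2}" using \<open>v \<noteq> u2\<close> o(5) by (auto simp: merge_def)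
  have "weight_preserving_contraction T T' v u1 u1"
  proof unfold_locales
    show "cells T' = ?\<phi> ` cells T"
      using o(6,7) \<open>v \<notin> dA T\<close> \<open>v \<noteq> u1\<close> merge_image[of v "cells T" u1 u1] t.edge_subset[OF e1]
      unfolding cells_def by auto
    show "dE T' = image ?\<phi> ` (dE T - {{v, u1}})"
      using t.merge_valency_2_vertex(2)[OF _ e1 o(4,5)] o(2,8) unfolding val_def
      by (auto simp: insert_commute)
    show "\<forall>\<epsilon>\<in>dE T - {{v, u1}}. \<forall>w\<in>\<epsilon>. w \<notin> {v, u1} \<longrightarrow> dq T' (?\<phi> ` \<epsilon>) w = dq T \<epsilon> w"
    proof (intro ballI impI)
      fix \<epsilon> w assume "\<epsilon> \<in> dE T - {{v, u1}}" "w \<in> \<epsilon>" "w \<notin> {v, u1}"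
      then show "dq T' (?\<phi> ` \<epsilon>) w = dq T \<epsilon> w"
        using untouched[of \<epsilon>] kept[of \<epsilon> w] moved o(12) by (cases "\<epsilon> = {v, u2}") auto
    qed
    show "\<forall>\<epsilon>\<in>dE T - {{v, u1}}. u1 \<in> \<epsilon> \<longrightarrow> dq T' (?\<phi> ` \<epsilon>) u1 = dq T \<epsilon> u1"
    proof (intro ballI impI)
      fix \<epsilon> assume "\<epsilon> \<in> dE T - {{v, u1}}" "u1 \<in> \<epsilon>"
      moreover then have "\<epsilon> \<noteq> {v, u2}" using o(5) \<open>v \<noteq> u1\<close> by auto
      ultimately show "dq T' (?\<phi> ` \<epsilon>) u1 = dq T \<epsilon> u1" using untouched kept by simp
    qed
    have "{v, u2} \<noteq> {v, u1}" using o(5) by (simp add: doubleton_eq_iff)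
    then have "side_edges T v u1 = {{v, u2}}"
      using t.valency_2_edges[OF _ e1 o(4,5)] o(2) unfolding side_edges_def val_def by blast
    then show "val T u1 = 1 \<or> (\<Prod>\<epsilon>\<in>side_edges T v u1. dq T' (?\<phi> ` \<epsilon>) u1) = dq T {v, u1} u1"
      using moved o(11) by (simp add: insert_commute)
    show "\<forall>\<alpha>\<in>dA T - A0 T. ?\<phi> \<alpha> = \<alpha>"
      using \<open>v \<notin> dA T\<close> by (auto simp: merge_def)
  qed (use T T' e1 o in auto)
  then show ?thesis using that by blast
qed

lemma dq_merge_touching_edge:
  assumes T: "decorated_tree T"
    and moved: "\<forall>x w. w \<in> {a, b} \<longrightarrow> {x, w} \<in> dE T \<longrightarrow> x \<notin> {a, b} \<longrightarrow>
      dq T' {x, c} x = dq T {x, w} x \<and> dq T' {x, c} c = dq T {x, w} w"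
    and \<epsilon>: "\<epsilon> \<in> dE T - {{a, b}}" "w \<in> {a, b}" "w \<in> \<epsilon>"
  obtains x where "\<epsilon> = {x, w}" "x \<notin> {a, b}"
    "dq T' (merge a b c ` \<epsilon>) x = dq T \<epsilon> x" "dq T' (merge a b c ` \<epsilon>) c = dq T \<epsilon> w"
proof -
  interpret tree "cells T" "dE T" using decorated_tree_tree[OF T] .
  obtain x where x: "\<epsilon> = {x, w}" "x \<noteq> w"
    using edge_other_end[of \<epsilon> w] \<epsilon> by (auto simp: insert_commute)
  then have "x \<notin> {a, b}" using \<epsilon> by auto
  moreover have "merge a b c ` \<epsilon> = {x, c}" using x \<epsilon>(2) calculation by (auto simp: merge_def)
  moreover have "dq T' {x, c} x = dq T {x, w} x \<and> dq T' {x, c} c = dq T {x, w} w"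
    using moved \<epsilon> x calculation(1) by blast
  ultimately show ?thesis using that x(1) by simp
qed

lemma dq_merge_far_end:
  assumes T: "decorated_tree T"
    and moved: "\<forall>x w. w \<in> {a, b} \<longrightarrow> {x, w} \<in> dE T \<longrightarrow> x \<notin> {a, b} \<longrightarrow>
      dq T' {x, c} x = dq T {x, w} x \<and> dq T' {x, c} c = dq T {x, w} w"
    and kept: "keeps_q_on {\<epsilon> \<in> dE T. a \<notin> \<epsilon> \<and> b \<notin> \<epsilon>} T T'"
    and \<epsilon>: "\<epsilon> \<in> dE T - {{a, b}}" "z \<in> \<epsilon>" "z \<notin> {a, b}"
  shows "dq T' (merge a b c ` \<epsilon>) z = dq T \<epsilon> z"
proof (cases "a \<in> \<epsilon> \<or> b \<in> \<epsilon>")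
  case True
  then obtain w where "w \<in> {a, b}" "w \<in> \<epsilon>" by blast
  then obtain x where "\<epsilon> = {x, w}" "dq T' (merge a b c ` \<epsilon>) x = dq T \<epsilon> x"
    using dq_merge_touching_edge[OF T moved \<epsilon>(1)] by metis
  then show ?thesis using \<epsilon> \<open>w \<in> {a, b}\<close> by auto
next
  case False
  then show ?thesis
    using merge_image_id[of a \<epsilon> b c] kept \<epsilon> unfolding keeps_q_on_def by auto
qed

lemma dq_merge_side_edge:
  assumes T: "decorated_tree T"
    and moved: "\<forall>x w. w \<in> {a, b} \<longrightarrow> {x, w} \<in> dE T \<longrightarrow> x \<notin> {a, b} \<longrightarrow>
      dq T' {x, c} x = dq T {x, w} x \<and> dq T' {x, c} c = dq T {x, w} w"
    and "{w, w'} = {a, b}" "\<epsilon> \<in> side_edges T w w'"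
  shows "dq T' (merge a b c ` \<epsilon>) c = dq T \<epsilon> w"
proof -
  have "\<epsilon> \<in> dE T - {{a, b}}" "w \<in> {a, b}" "w \<in> \<epsilon>"
    using assms(3,4) unfolding side_edges_def by auto
  then show ?thesis using dq_merge_touching_edge[OF T moved] by metis
qed

lemma op_d_contraction:
  assumes T: "decorated_tree T" and T': "decorated_tree T'" and "op_d T T'"
  obtains a b c where "weight_preserving_contraction T T' a b c"
proof -
  obtain v1 v2 v where o: "v1 \<in> dV T" "v2 \<in> dV T" "{v1, v2} \<in> dE T"
      "dq T {v1, v2} v1 = QQ T {v1, v2} v2" "dq T {v1, v2} v2 = QQ T {v1, v2} v1"
      "v \<notin> cells T" "dV T' = (dV T - {v1, v2}) \<union> {v}" "dA T' = dA T"
      "dE T' = {\<epsilon> \<in> dE T. v1 \<notin> \<epsilon> \<and> v2 \<notin> \<epsilon>} \<union>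
              {{x, v} | x. \<exists>w\<in>{v1, v2}. {x, w} \<in> dE T \<and> x \<notin> {v1, v2}}"
      "keeps_f T T'" "keeps_q_on {\<epsilon> \<in> dE T. v1 \<notin> \<epsilon> \<and> v2 \<notin> \<epsilon>} T T'"
      "\<forall>x w. w \<in> {v1, v2} \<longrightarrow> {x, w} \<in> dE T \<longrightarrow> x \<notin> {v1, v2} \<longrightarrow>
          dq T' {x, v} x = dq T {x, w} x \<and> dq T' {x, v} v = dq T {x, w} w"
    using assms(3) unfolding op_d_def by (elim exE conjE) (rule that; assumption)
  interpret t: tree "cells T" "dE T" using decorated_tree_tree[OF T] .
  let ?\<phi> = "merge v1 v2 v"
  have "v1 \<notin> dA T" "v2 \<notin> dA T" using o(1,2) decorated_tree_disjoint[OF T] by auto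
  have side_prod: "(\<Prod>\<epsilon>\<in>side_edges T w w'. dq T' (?\<phi> ` \<epsilon>) v) = QQ T {v1, v2} w"
    if "{w, w'} = {v1, v2}" for w w'
  proof -
    have "side_edges T w w' = {e' \<in> dE T. w \<in> e' \<and> e' \<noteq> {v1, v2}}"
      using that unfolding side_edges_def by auto
    then show ?thesis
      unfolding QQ_def using dq_merge_side_edge[OF T o(12) that] by (intro prod.cong) auto
  qed
  have "weight_preserving_contraction T T' v1 v2 v"
  proof unfold_locales
    show "cells T' = ?\<phi> ` cells T"
      using o(1,7,8) \<open>v1 \<notin> dA T\<close> \<open>v2 \<notin> dA T\<close> merge_image[of v1 "cells T" v2 v]
      unfolding cells_def by auto
    show "dE T' = image ?\<phi> ` (dE T - {{v1, v2}})"
      using t.image_merge_edges[OF o(3)] o(9) by simp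
    show "\<forall>\<epsilon>\<in>dE T - {{v1, v2}}. \<forall>z\<in>\<epsilon>. z \<notin> {v1, v2} \<longrightarrow> dq T' (?\<phi> ` \<epsilon>) z = dq T \<epsilon> z"
      using dq_merge_far_end[OF T o(12,11)] by blast
    show "\<forall>\<epsilon>\<in>dE T - {{v1, v2}}. v2 \<in> \<epsilon> \<longrightarrow> dq T' (?\<phi> ` \<epsilon>) v = dq T \<epsilon> v2"
      using dq_merge_side_edge[OF T o(12), of v2 v1] unfolding side_edges_def
      by (simp add: insert_commute)
    show "val T v2 = 1 \<or> (\<Prod>\<epsilon>\<in>side_edges T v1 v2. dq T' (?\<phi> ` \<epsilon>) v) = dq T {v1, v2} v2"
      using side_prod[of v1 v2] o(5) by simp
    have "\<forall>\<epsilon>\<in>side_edges T v1 v2. dq T' (?\<phi> ` \<epsilon>) v = dq T \<epsilon> v1"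
      using dq_merge_side_edge[OF T o(12), of v1 v2] by simp
    then show "merge_compatible T T' v1 v2 v \<or> val T v1 = 2"
      using side_prod[of v2 v1] o(4) unfolding merge_compatible_def by (simp add: insert_commute)
    show "\<forall>\<alpha>\<in>dA T - A0 T. ?\<phi> \<alpha> = \<alpha>"
      using \<open>v1 \<notin> dA T\<close> \<open>v2 \<notin> dA T\<close> by (auto simp: merge_def)
  qed (use T T' o \<open>v2 \<notin> dA T\<close> in auto)
  then show ?thesis using that by blast
qed

theorem lemma1p15:
  fixes T T' :: "'a dtree"
  assumes "decorated_tree T" and "decorated_tree T'"
    and "op_a T T' \<or> op_b T T' \<or> op_c T T' \<or> op_d T T'"
  shows "MM T = MM T' \<and> FF T = FF T'"
proof -
  obtain a b c where "weight_preserving_contraction T T' a b c"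
    using assms op_a_contraction op_b_contraction op_c_contraction op_d_contraction by metis
  then show ?thesis
    using weight_preserving_contraction.MM_merge weight_preserving_contraction.FF_merge by metis
qed

end
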